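(* Assume (A1)–(A3), (B1) and (C). Then for every sufficiently small $\lambda$ there exist points $t_{\lambda,1},\dots,t_{\lambda,M}$ such that each $t_{\lambda,m}$ is a local extremum of $f_\lambda$ and $|t_{\lambda,m}-t_m|\lesssim\lambda^{r_1}$. Moreover, on the event $A_n$ there exist points $\hat t_1,\dots,\hat t_M$ such that each $\hat t_m$ is a local extremum of $\widehat\mu_f$ and $|\hat t_m-t_{\lambda,m}|\lesssim \sqrt{\log n}/(\sqrt n\lambda)$.
   Context: Data: $(X_i,y_i)$, $i=1,\dots,n$, i.i.d. from $\mathbb P_0$ on $[0,1]\times\mathbb R$ with $y_i=f_0(X_i)+\epsilon_i$, $X_i$ having a density $p_X$ on $[0,1]$, $\epsilon_i\sim N(0,\sigma^2)$ i.i.d. independent of the $X_i$. $X=(X_1,\dots,X_n)$, $\mathbf y=(y_i)$, $\lambda=\lambda_n>0$. $K$ is a continuous symmetric positive definite kernel on $[0,1]^2$, $K_{jl}=\partial^{j+l}K/\partial x^j\partial x'^l$, $K(X,X)=(K(X_i,X_j))$, $K_{j0}(x,X)=(K_{j0}(x,X_i))_i$ (row), $K_{0l}(X,x)$ (column). $\widehat\mu_f(x)=K(x,X)[K(X,X)+n\lambda I_n]^{-1}\mathbf y$; $\widehat\mu^{(k)}_{f'}(x)=K_{k+1,0}(x,X)[K(X,X)+n\lambda I_n]^{-1}\mathbf y$; $\widehat\sigma^{2(k)}_{f'}(x)=\sigma^2(n\lambda)^{-1}\sum_{i=0}^k\binom ki\{K_{i+1,k+1-i}(x,x)-K_{i+1,0}(x,X)[K(X,X)+n\lambda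 I_n]^{-1}K_{0,k+1-i}(X,x)\}$. $L_Kf(x)=\int_0^1K(x,x')f(x')p_X(x')dx'$; $f_\lambda=(L_K+\lambda I)^{-1}L_Kf_0$; $\varphi_{jl}(x)=[(L_K+\lambda I)^{-1}K_{jl}(x,\cdot)](x)$; $\kappa_{jj}=\sup_xK_{jj}(x,x)$, $\kappa=\kappa_{00}$, $\kappa_{0j}=\sup_{x,x'}|K_{0j}(x,x')|$, $R=\|f_0\|_\infty\vee\sigma$. Assumptions: (A1) $f_0\in C^2[0,1]$; (A2) $f_0$ has exactly $M$ local extrema, $M\ge1$ finite, at $0<t_1<\dots<t_M<1$; (A3) $f_0''(t_m)\neq0$ for all $m$; (B1) $K\in C^8([0,1]^2)$; (C) $\|f_\lambda'-f_0'\|_\infty\lesssim\lambda^{r_1}$ and $\|f_\lambda''-f_0''\|_\infty\lesssim\lambda^{r_2}$ for some $0<r_1,r_2\le1$. $A_n$ denotes an event with $\mathbb P_0(A_n)\ge1-n^{-10}$ on which, for all $k=0,\dots,3$ and $x\in[0,1]$: $\|\widehat\mu^{(k)}_{f'}-f_\lambda^{(k+1)}\|_\infty\le \frac{2\sqrt{\kappa\kappa_{k+1,k+1}}R\sqrt{10\log n+3}}{\sqrt n\lambda}(14+\frac{8\sqrt\kappa\sqrt{10\log n+3}}{3\sqrt{n\lambda}})$ and $|\widehat\sigma^{2(k)}_{f'}(x)-\sigma^2n^{-1}\sum_{i=0}^k\binom ki\varphi_{i+1,k+1-i}(x)|\le\sum_{i=0}^k\binom ki\frac{\sqrt{\kappa\kappa_{i+1,i+1}}\kappa_{0,k+1-i}\sigma^2\sqrt{20\log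 n+6}}{n\sqrt n\lambda^2}(10+\frac{4\sqrt\kappa\sqrt{20\log n+6}}{3\sqrt{n\lambda}})$ (such an event exists when (B1) holds). The symbol $\lesssim$ means inequality up to a constant not depending on $n$ or $\lambda$. *)

theory Defs
  imports "HOL-Analysis.Analysis"
begin

definition is_local_extremum :: "(real \<Rightarrow> real) \<Rightarrow> real \<Rightarrow> bool" where
  "is_local_extremum f t \<longleftrightarrow> t \<in> {0<..<1} \<and>
     (\<exists>e>0. (\<forall>s. \<bar>s - t\<bar> < e \<longrightarrow> f s \<le> f t) \<or> (\<forall>s. \<bar>s - t\<bar> < e \<longrightarrow> f t \<le> f s))"

definition pd_kernel :: "(real \<Rightarrow> real \<Rightarrow> real) \<Rightarrow> bool" where
  "pd_kernel K \<longleftrightarrow>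
     (\<forall>x\<in>{0..1}. \<forall>x'\<in>{0..1}. K x x' = K x' x) \<and>
     (\<forall>(n::nat) (z::nat \<Rightarrow> real) (c::nat \<Rightarrow> real). (\<forall>i<n. z i \<in> {0..1}) \<longrightarrow>
        0 \<le> (\<Sum>i<n. \<Sum>j<n. c i * c j * K (z i) (z j)))"

text \<open>K is C^r on [0,1]^2 with partial derivatives Kd j l = d^(j+l) K / dx^j dx'^l.\<close>
definition kernel_Ck :: "nat \<Rightarrow> (real \<Rightarrow> real \<Rightarrow> real) \<Rightarrow> (nat \<Rightarrow> nat \<Rightarrow> real \<Rightarrow> real \<Rightarrow> real) \<Rightarrow> bool" where
  "kernel_Ck r K Kd \<longleftrightarrow>
     (\<forall>x\<in>{0..1}. \<forall>x'\<in>{0..1}. Kd 0 0 x x' = K x x') \<and>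
     (\<forall>j l. j + l \<le> r \<longrightarrow> continuous_on ({0..1} \<times> {0..1}) (\<lambda>(x, x'). Kd j l x x')) \<and>
     (\<forall>j l. j + l < r \<longrightarrow> (\<forall>x\<in>{0..1}. \<forall>x'\<in>{0..1}.
        ((\<lambda>s. Kd j l s x') has_real_derivative Kd (Suc j) l x x') (at x within {0..1}) \<and>
        ((\<lambda>s. Kd j l x s) has_real_derivative Kd j (Suc l) x x') (at x' within {0..1})))"

definition LK :: "(real \<Rightarrow> real \<Rightarrow> real) \<Rightarrow> (real \<Rightarrow> real) \<Rightarrow> (real \<Rightarrow> real) \<Rightarrow> real \<Rightarrow> real" where
  "LK K p f x = integral {0..1} (\<lambda>x'. K x x' * f x' * p x')"

text \<open>(L_K + lam I)^{-1} h, as the continuous function on [0,1] (zero outside) solving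
  L_K g + lam g = h on [0,1].\<close>
definition resolvent :: "(real \<Rightarrow> real \<Rightarrow> real) \<Rightarrow> (real \<Rightarrow> real) \<Rightarrow> real \<Rightarrow> (real \<Rightarrow> real) \<Rightarrow> real \<Rightarrow> real" where
  "resolvent K p lam h = (THE g. continuous_on {0..1} g \<and> (\<forall>x. x \<notin> {0..1} \<longrightarrow> g x = 0) \<and>
       (\<forall>x\<in>{0..1}. LK K p g x + lam * g x = h x))"

definition f_lambda :: "(real \<Rightarrow> real \<Rightarrow> real) \<Rightarrow> (real \<Rightarrow> real) \<Rightarrow> real \<Rightarrow> (real \<Rightarrow> real) \<Rightarrow> real \<Rightarrow> real" where
  "f_lambda K p lam f0 = resolvent K p lam (LK K p f0)"

definition phi :: "(real \<Rightarrow> real \<Rightarrow> real) \<Rightarrow> (nat \<Rightarrow> nat \<Rightarrow> real \<Rightarrow> real \<Rightarrow> real) \<Rightarrow> (real \<Rightarrow> real) \<Rightarrow> real \<Rightarrow> nat \<Rightarrow> nat \<Rightarrow> real \<Rightarrow> real" where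
  "phi K Kd p lam j l x = resolvent K p lam (\<lambda>x'. Kd j l x x') x"

text \<open>[K(X,X) + n lam I_n]^{-1} b, vectors indexed by i < n (zero beyond).\<close>
definition krr_solve :: "(real \<Rightarrow> real \<Rightarrow> real) \<Rightarrow> nat \<Rightarrow> real \<Rightarrow> (nat \<Rightarrow> real) \<Rightarrow> (nat \<Rightarrow> real) \<Rightarrow> nat \<Rightarrow> real" where
  "krr_solve K n lam X b = (THE a. (\<forall>i. n \<le> i \<longrightarrow> a i = 0) \<and>
       (\<forall>i<n. (\<Sum>j<n. K (X i) (X j) * a j) + real n * lam * a i = b i))"

definition mu_hat :: "(real \<Rightarrow> real \<Rightarrow> real) \<Rightarrow> nat \<Rightarrow> real \<Rightarrow> (nat \<Rightarrow> real) \<Rightarrow> (nat \<Rightarrow> real) \<Rightarrow> real \<Rightarrow> real" where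
  "mu_hat K n lam X y x = (\<Sum>i<n. K x (X i) * krr_solve K n lam X y i)"

definition mu_hat_deriv :: "(real \<Rightarrow> real \<Rightarrow> real) \<Rightarrow> (nat \<Rightarrow> nat \<Rightarrow> real \<Rightarrow> real \<Rightarrow> real) \<Rightarrow> nat \<Rightarrow> real \<Rightarrow> (nat \<Rightarrow> real) \<Rightarrow> (nat \<Rightarrow> real) \<Rightarrow> nat \<Rightarrow> real \<Rightarrow> real" where
  "mu_hat_deriv K Kd n lam X y k x = (\<Sum>i<n. Kd (Suc k) 0 x (X i) * krr_solve K n lam X y i)"

definition sigma2_hat :: "(real \<Rightarrow> real \<Rightarrow> real) \<Rightarrow> (nat \<Rightarrow> nat \<Rightarrow> real \<Rightarrow> real \<Rightarrow> real) \<Rightarrow> real \<Rightarrow> nat \<Rightarrow> real \<Rightarrow> (nat \<Rightarrow> real) \<Rightarrow> nat \<Rightarrow> real \<Rightarrow> real" where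
  "sigma2_hat K Kd sig n lam X k x = sig\<^sup>2 / (real n * lam) *
     (\<Sum>i\<le>k. real (k choose i) * (Kd (Suc i) (Suc k - i) x x -
        (\<Sum>j<n. Kd (Suc i) 0 x (X j) * krr_solve K n lam X (\<lambda>j'. Kd 0 (Suc k - i) (X j') x) j)))"

definition kappa_diag :: "(nat \<Rightarrow> nat \<Rightarrow> real \<Rightarrow> real \<Rightarrow> real) \<Rightarrow> nat \<Rightarrow> real" where
  "kappa_diag Kd j = (SUP x\<in>{0..1}. Kd j j x x)"

definition kappa_0 :: "(nat \<Rightarrow> nat \<Rightarrow> real \<Rightarrow> real \<Rightarrow> real) \<Rightarrow> nat \<Rightarrow> real" where
  "kappa_0 Kd j = (SUP z\<in>{0..1} \<times> {0..1}. \<bar>Kd 0 j (fst z) (snd z)\<bar>)"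

definition R_const :: "(real \<Rightarrow> real) \<Rightarrow> real \<Rightarrow> real" where
  "R_const f0 sig = max (SUP x\<in>{0..1}. \<bar>f0 x\<bar>) sig"

definition event_An :: "(real \<Rightarrow> real \<Rightarrow> real) \<Rightarrow> (nat \<Rightarrow> nat \<Rightarrow> real \<Rightarrow> real \<Rightarrow> real) \<Rightarrow> (real \<Rightarrow> real) \<Rightarrow>
    (real \<Rightarrow> real) \<Rightarrow> real \<Rightarrow> real \<Rightarrow> nat \<Rightarrow> (nat \<Rightarrow> real) \<Rightarrow> (nat \<Rightarrow> real) \<Rightarrow> bool" where
  "event_An K Kd p f0 sig lam n X y \<longleftrightarrow>
     (let \<kappa> = kappa_diag Kd 0; R = R_const f0 sig in
      \<forall>k\<le>3.
       (\<forall>x\<in>{0<..<1}. \<bar>mu_hat_deriv K Kd n lam X y k x - (deriv ^^ Suc k) (f_lambda K p lam f0) x\<bar>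
          \<le> 2 * sqrt (\<kappa> * kappa_diag Kd (Suc k)) * R * sqrt (10 * ln (real n) + 3) / (sqrt (real n) * lam)
            * (14 + 8 * sqrt \<kappa> * sqrt (10 * ln (real n) + 3) / (3 * sqrt (real n * lam)))) \<and>
       (\<forall>x\<in>{0..1}. \<bar>sigma2_hat K Kd sig n lam X k x
            - sig\<^sup>2 / real n * (\<Sum>i\<le>k. real (k choose i) * phi K Kd p lam (Suc i) (Suc k - i) x)\<bar>
          \<le> (\<Sum>i\<le>k. real (k choose i) * (sqrt (\<kappa> * kappa_diag Kd (Suc i)) * kappa_0 Kd (Suc k - i) * sig\<^sup>2
               * sqrt (20 * ln (real n) + 6) / (real n * sqrt (real n) * lam\<^sup>2)
               * (10 + 4 * sqrt \<kappa> * sqrt (20 * ln (real n) + 6) / (3 * sqrt (real n * lam)))))))"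

end

theory Submission
  imports Defs
begin

text \<open>
  Since \<open>K\<close> is continuous and positive semidefinite, \<open>L\<^sub>K\<close> is self-adjoint on \<open>L\<^sup>2(p)\<close> with
  \<open>0 \<le> L\<^sub>K \<le> \<kappa>\<close> for \<open>\<kappa> = sup |K|\<close>. Hence the resolvent equation \<open>L\<^sub>K g + \<lambda> g = h\<close> has a unique
  continuous solution, and since \<open>L\<^sub>K\<close> maps continuous functions to differentiable ones,
  \<open>f\<^sub>\<lambda> = (L\<^sub>K f\<^sub>0 - L\<^sub>K f\<^sub>\<lambda>) / \<lambda>\<close> is differentiable on \<open>(0,1)\<close>. Only this makes hypothesis (C), which
  is phrased with \<open>deriv\<close>, say anything about \<open>f\<^sub>\<lambda>\<close>.

  By (A1)-(A3), \<open>f\<^sub>0'\<close> vanishes at each \<open>t\<^sub>m\<close> and \<open>|f\<^sub>0''| \<ge> a\<close> with a fixed sign near \<open>t\<^sub>m\<close>. If \<open>F'\<close> is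
  uniformly within \<open>e\<close> of \<open>f\<^sub>0'\<close>, it changes sign within \<open>e / a\<close> of \<open>t\<^sub>m\<close>, so \<open>F\<close> has a local extremum
  there; for \<open>F = f\<^sub>\<lambda>\<close> and \<open>e = C \<lambda>\<^sup>r\<^sup>1\<close> this is \<open>t\<^sub>\<lambda>\<^sub>,\<^sub>m\<close>. On \<open>A\<^sub>n\<close> the first two derivatives of
  \<open>\<mu>\<close> are within \<open>\<epsilon> = O(sqrt(log n) / (sqrt n \<lambda>))\<close> of those of \<open>f\<^sub>\<lambda>\<close>, so \<open>\<mu>''\<close> keeps the sign of
  \<open>f\<^sub>0''(t\<^sub>m)\<close> near \<open>t\<^sub>\<lambda>\<^sub>,\<^sub>m\<close> while \<open>|\<mu>'(t\<^sub>\<lambda>\<^sub>,\<^sub>m)| \<le> \<epsilon>\<close>; the same argument then puts an extremum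
  of \<open>\<mu>\<close> within \<open>2 \<epsilon> / a\<close> of \<open>t\<^sub>\<lambda>\<^sub>,\<^sub>m\<close>.
\<close>

section \<open>Riemann sums against a density on the unit interval\<close>

lemma uniformly_continuous_on_unit_square:
  fixes F :: "real \<Rightarrow> real \<Rightarrow> real"
  assumes "continuous_on ({0..1} \<times> {0..1}) (\<lambda>(x, t). F x t)" and "0 < e"
  obtains d where "0 < d"
    and "\<And>x y t s. x \<in> {0..1} \<Longrightarrow> y \<in> {0..1} \<Longrightarrow> t \<in> {0..1} \<Longrightarrow> s \<in> {0..1} \<Longrightarrow>
           \<bar>y - x\<bar> < d \<Longrightarrow> \<bar>s - t\<bar> < d \<Longrightarrow> \<bar>F y s - F x t\<bar> < e"
proof -
  have "uniformly_continuous_on ({0..1::real} \<times> {0..1}) (\<lambda>(x, t). F x t)"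
    using assms(1) by (intro compact_uniformly_continuous compact_Times) auto
  then obtain d where d: "d > 0" and
    close: "\<forall>z\<in>{0..1::real} \<times> {0..1}. \<forall>z'\<in>{0..1} \<times> {0..1}. dist z' z < d \<longrightarrow>
          dist ((\<lambda>(x, t). F x t) z') ((\<lambda>(x, t). F x t) z) < e"
    unfolding uniformly_continuous_on_def using assms(2) by metis
  show ?thesis
  proof (rule that[of "d / 2"])
    fix x y t s :: real assume xyts: "x \<in> {0..1}" "y \<in> {0..1}" "t \<in> {0..1}" "s \<in> {0..1}"
      and near: "\<bar>y - x\<bar> < d / 2" "\<bar>s - t\<bar> < d / 2"
    have "dist (y, s) (x, t) \<le> dist y x + dist s t"
      unfolding dist_Pair_Pair by (rule real_le_lsqrt) (auto simp: power2_eq_square algebra_simps)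
    also have "\<dots> < d" using near by (simp add: dist_real_def)
    finally show "\<bar>F y s - F x t\<bar> < e" using close xyts by (auto simp: dist_real_def)
  qed (use d in auto)
qed

lemma continuous_on_unit_square_slice:
  fixes F :: "real \<Rightarrow> real \<Rightarrow> real"
  assumes "continuous_on ({0..1} \<times> {0..1}) (\<lambda>(x, t). F x t)" and "x \<in> {0..1}"
  shows "continuous_on {0..1} (F x)"
proof -
  have "continuous_on {0..1} ((\<lambda>(x, t). F x t) \<circ> (\<lambda>t. (x, t)))"
    using assms by (intro continuous_on_compose continuous_intros) (auto elim: continuous_on_subset)
  then show ?thesis by (simp add: o_def)
qed

lemma continuous_on_unit_square_slice':
  fixes F :: "real \<Rightarrow> real \<Rightarrow> real"
  assumes "continuous_on ({0..1} \<times> {0..1}) (\<lambda>(x, t). F x t)" and "t \<in> {0..1}"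
  shows "continuous_on {0..1} (\<lambda>x. F x t)"
proof -
  have "continuous_on {0..1} ((\<lambda>(x, t). F x t) \<circ> (\<lambda>x. (x, t)))"
    using assms by (intro continuous_on_compose continuous_intros) (auto elim: continuous_on_subset)
  then show ?thesis by (simp add: o_def)
qed

definition node :: "nat \<Rightarrow> nat \<Rightarrow> real" where
  "node N k = real k / real N"

definition cell :: "nat \<Rightarrow> nat \<Rightarrow> real set" where
  "cell N k = {node N k .. node N (Suc k)}"

lemma node_in_unit_interval: "k < N \<Longrightarrow> node N k \<in> {0..1}"
  unfolding node_def by auto

lemma cell_subset_unit_interval: "k < N \<Longrightarrow> cell N k \<subseteq> {0..1}"
  unfolding cell_def node_def by auto

lemma dist_node_le: "t \<in> cell N k \<Longrightarrow> \<bar>t - node N k\<bar> \<le> 1 / real N"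
proof -
  have "node N (Suc k) - node N k = 1 / real N"
    unfolding node_def by (simp add: diff_divide_distrib[symmetric])
  then show "t \<in> cell N k \<Longrightarrow> \<bar>t - node N k\<bar> \<le> 1 / real N"
    unfolding cell_def by auto
qed

lemma integral_unit_interval_cells:
  fixes g :: "real \<Rightarrow> real"
  assumes g: "g integrable_on {0..1}" and N: "0 < N"
  shows "integral {0..1} g = (\<Sum>k<N. integral (cell N k) g)"
proof -
  have "integral {0..node N m} g = (\<Sum>k<m. integral (cell N k) g)" if "m \<le> N" for m
    using that
  proof (induction m)
    case (Suc m)
    have "integral {0..node N m} g + integral (cell N m) g = integral {0..node N (Suc m)} g"
      unfolding cell_def using Suc.prems N
      by (intro Henstock_Kurzweil_Integration.integral_combine integrable_on_subinterval[OF g])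
        (auto simp: node_def divide_right_mono)
    then show ?case using Suc by simp
  qed (simp add: node_def)
  from this[of N] N show ?thesis by (simp add: node_def)
qed

locale unit_interval_density =
  fixes p :: "real \<Rightarrow> real"
  assumes density_nonneg: "\<forall>x\<in>{0..1}. 0 \<le> p x"
    and density_integrable: "p integrable_on {0..1}"
    and density_integral: "integral {0..1} p = 1"
begin

definition Ep :: "(real \<Rightarrow> real) \<Rightarrow> real" where
  "Ep f = integral {0..1} (\<lambda>x. f x * p x)"

lemma integrable_times_density:
  assumes "continuous_on {0..1} f"
  shows "(\<lambda>x. f x * p x) integrable_on {0..1}"
proof -
  have "(\<lambda>x. f x * p x) absolutely_integrable_on {0..1}"
  proof (rule absolutely_integrable_bounded_measurable_product_real)
    show "f \<in> borel_measurable (lebesgue_on {0..1})"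
      using assms by (intro continuous_imp_measurable_on_sets_lebesgue) auto
    show "bounded (f ` {0..1})"
      using assms by (intro compact_imp_bounded compact_continuous_image) auto
    show "p absolutely_integrable_on {0..1}"
      using density_integrable density_nonneg by (intro nonnegative_absolutely_integrable_1) auto
  qed auto
  then show ?thesis using absolutely_integrable_on_def by blast
qed

lemma integrable_density_on_cell: "k < N \<Longrightarrow> p integrable_on cell N k"
  using integrable_on_subinterval[OF density_integrable] cell_subset_unit_interval
  by (simp add: cell_def)

lemma Ep_add:
  "continuous_on {0..1} f \<Longrightarrow> continuous_on {0..1} g \<Longrightarrow> Ep (\<lambda>x. f x + g x) = Ep f + Ep g"
  unfolding Ep_def distrib_right by (intro integral_add integrable_times_density)

lemma Ep_diff:
  "continuous_on {0..1} f \<Longrightarrow> continuous_on {0..1} g \<Longrightarrow> Ep (\<lambda>x. f x - g x) = Ep f - Ep g"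
  unfolding Ep_def left_diff_distrib by (intro integral_diff integrable_times_density)

lemma Ep_cmult: "Ep (\<lambda>x. c * f x) = c * Ep f"
  unfolding Ep_def by (simp add: mult.assoc)

lemma Ep_const: "Ep (\<lambda>x. c) = c"
  unfolding Ep_def using density_integral by simp

lemma Ep_cong: "(\<And>x. x \<in> {0..1} \<Longrightarrow> f x = g x) \<Longrightarrow> Ep f = Ep g"
  unfolding Ep_def by (intro integral_cong) simp

lemma Ep_sum:
  "finite A \<Longrightarrow> (\<And>k. k \<in> A \<Longrightarrow> continuous_on {0..1} (f k)) \<Longrightarrow>
    Ep (\<lambda>x. \<Sum>k\<in>A. f k x) = (\<Sum>k\<in>A. Ep (f k))"
proof (induction A rule: finite_induct)
  case empty
  then show ?case using Ep_const[of 0] by simp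
next
  case (insert a A)
  then show ?case by (simp add: Ep_add continuous_on_sum)
qed

lemma Ep_mono:
  "continuous_on {0..1} f \<Longrightarrow> continuous_on {0..1} g \<Longrightarrow> (\<And>x. x \<in> {0..1} \<Longrightarrow> f x \<le> g x) \<Longrightarrow>
    Ep f \<le> Ep g"
  unfolding Ep_def using density_nonneg
  by (intro integral_le integrable_times_density) (auto intro!: mult_right_mono)

lemma Ep_nonneg: "continuous_on {0..1} f \<Longrightarrow> (\<And>x. x \<in> {0..1} \<Longrightarrow> 0 \<le> f x) \<Longrightarrow> 0 \<le> Ep f"
  using Ep_mono[of "\<lambda>x. 0" f] by (simp add: Ep_const)

lemma abs_Ep_le_Ep_abs:
  assumes f: "continuous_on {0..1} f"
  shows "\<bar>Ep f\<bar> \<le> Ep (\<lambda>x. \<bar>f x\<bar>)"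
proof -
  have "Ep f \<le> Ep (\<lambda>x. \<bar>f x\<bar>)" using f by (intro Ep_mono continuous_intros) auto
  moreover have "Ep (\<lambda>x. - \<bar>f x\<bar>) \<le> Ep f" using f by (intro Ep_mono continuous_intros) auto
  ultimately show ?thesis using Ep_cmult[of "-1" "\<lambda>x. \<bar>f x\<bar>"] by auto
qed

lemma abs_Ep_le:
  assumes "continuous_on {0..1} f" and "\<And>x. x \<in> {0..1} \<Longrightarrow> \<bar>f x\<bar> \<le> B"
  shows "\<bar>Ep f\<bar> \<le> B"
proof -
  have "Ep (\<lambda>x. \<bar>f x\<bar>) \<le> Ep (\<lambda>x. B)" using assms by (intro Ep_mono continuous_intros) auto
  then show ?thesis using abs_Ep_le_Ep_abs[OF assms(1)] by (simp add: Ep_const)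
qed

lemma Ep_abs_le_sqrt_Ep_square:
  assumes f: "continuous_on {0..1} f"
  shows "Ep (\<lambda>x. \<bar>f x\<bar>) \<le> sqrt (Ep (\<lambda>x. (f x)\<^sup>2))"
proof -
  define a where "a = Ep (\<lambda>x. \<bar>f x\<bar>)"
  have abs_f: "continuous_on {0..1} (\<lambda>x. \<bar>f x\<bar>)" using f by (intro continuous_intros)
  have "0 \<le> Ep (\<lambda>x. (\<bar>f x\<bar> - a)\<^sup>2)"
    using f by (intro Ep_nonneg continuous_intros) auto
  also have "Ep (\<lambda>x. (\<bar>f x\<bar> - a)\<^sup>2) = Ep (\<lambda>x. ((f x)\<^sup>2 - 2 * a * \<bar>f x\<bar>) + a\<^sup>2)"
    by (rule Ep_cong) (simp add: power2_eq_square algebra_simps)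
  also have "\<dots> = Ep (\<lambda>x. (f x)\<^sup>2) - a\<^sup>2"
    using f abs_f
    by (simp add: Ep_add Ep_diff Ep_cmult Ep_const continuous_intros a_def[symmetric] power2_eq_square)
  finally show ?thesis
    unfolding a_def[symmetric] by (simp add: real_le_rsqrt)
qed

definition cell_mass :: "nat \<Rightarrow> nat \<Rightarrow> real" where
  "cell_mass N k = integral (cell N k) p"

lemma cell_mass_nonneg:
  assumes "k < N"
  shows "0 \<le> cell_mass N k"
proof -
  have "0 \<le> p t" if "t \<in> cell N k" for t
    using that cell_subset_unit_interval[OF assms] density_nonneg by auto
  then show ?thesis
    unfolding cell_mass_def using integrable_density_on_cell[OF assms] by (intro integral_nonneg) auto
qed

lemma sum_cell_mass: "0 < N \<Longrightarrow> (\<Sum>k<N. cell_mass N k) = 1"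
  unfolding cell_mass_def using integral_unit_interval_cells[OF density_integrable] density_integral
  by simp

lemma Ep_riemann_sum_error:
  assumes G: "continuous_on {0..1} G" and N: "0 < N"
    and osc: "\<And>k t. k < N \<Longrightarrow> t \<in> cell N k \<Longrightarrow> \<bar>G t - G (node N k)\<bar> \<le> e"
  shows "\<bar>Ep G - (\<Sum>k<N. cell_mass N k * G (node N k))\<bar> \<le> e"
proof -
  have Gp: "(\<lambda>t. G t * p t) integrable_on cell N k" if "k < N" for k
    using integrable_on_subinterval[OF integrable_times_density[OF G]] cell_subset_unit_interval[OF that]
    by (simp add: cell_def)
  have Gzp: "(\<lambda>t. G (node N k) * p t) integrable_on cell N k" if "k < N" for k
    using integrable_density_on_cell[OF that] by (rule integrable_on_mult_right)
  have integrable: "(\<lambda>t. (G t - G (node N k)) * p t) integrable_on cell N k" if "k < N" for k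
    unfolding left_diff_distrib using Gp[OF that] Gzp[OF that] by (rule integrable_diff)
  have "Ep G - (\<Sum>k<N. cell_mass N k * G (node N k)) =
      (\<Sum>k<N. integral (cell N k) (\<lambda>t. (G t - G (node N k)) * p t))"
  proof -
    have "Ep G = (\<Sum>k<N. integral (cell N k) (\<lambda>t. G t * p t))"
      unfolding Ep_def using integral_unit_interval_cells[OF integrable_times_density[OF G] N] .
    moreover have "integral (cell N k) (\<lambda>t. G t * p t) - cell_mass N k * G (node N k) =
        integral (cell N k) (\<lambda>t. (G t - G (node N k)) * p t)" if "k < N" for k
      unfolding left_diff_distrib integral_diff[OF Gp[OF that] Gzp[OF that]] cell_mass_def
      by (simp add: mult.commute)
    then have "(\<Sum>k<N. integral (cell N k) (\<lambda>t. G t * p t) - cell_mass N k * G (node N k)) =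
        (\<Sum>k<N. integral (cell N k) (\<lambda>t. (G t - G (node N k)) * p t))"
      by (intro sum.cong) auto
    ultimately show ?thesis by (simp add: sum_subtractf)
  qed
  also have "\<bar>\<dots>\<bar> \<le> (\<Sum>k<N. e * cell_mass N k)"
  proof (intro order_trans[OF sum_abs sum_mono])
    fix k assume "k \<in> {..<N}"
    then have k: "k < N" by simp
    have "\<bar>(G t - G (node N k)) * p t\<bar> \<le> e * p t" if "t \<in> cell N k" for t
    proof -
      have "0 \<le> p t" using density_nonneg cell_subset_unit_interval[OF k] that by auto
      then show ?thesis using osc[OF k that] by (simp add: abs_mult mult_right_mono)
    qed
    then show "\<bar>integral (cell N k) (\<lambda>t. (G t - G (node N k)) * p t)\<bar> \<le> e * cell_mass N k"
      unfolding cell_mass_def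
      using integral_norm_bound_integral[OF integrable[OF k] integrable_on_mult_right[OF integrable_density_on_cell[OF k]]]
      by simp
  qed
  also have "\<dots> = e" using sum_cell_mass[OF N] by (simp add: sum_distrib_left[symmetric])
  finally show ?thesis .
qed

lemma continuous_on_Ep_slice:
  fixes F :: "real \<Rightarrow> real \<Rightarrow> real"
  assumes F: "continuous_on ({0..1} \<times> {0..1}) (\<lambda>(x, t). F x t)"
  shows "continuous_on {0..1} (\<lambda>x. Ep (F x))"
proof (rule continuous_on_iff[THEN iffD2], intro ballI allI impI)
  fix x e :: real assume x: "x \<in> {0..1}" and e: "0 < e"
  obtain d where d: "0 < d" and close: "\<And>x y t s. x \<in> {0..1} \<Longrightarrow> y \<in> {0..1} \<Longrightarrow> t \<in> {0..1} \<Longrightarrow>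
      s \<in> {0..1} \<Longrightarrow> \<bar>y - x\<bar> < d \<Longrightarrow> \<bar>s - t\<bar> < d \<Longrightarrow> \<bar>F y s - F x t\<bar> < e / 2"
    using uniformly_continuous_on_unit_square[OF F, of "e / 2"] e by auto
  have "dist (Ep (F y)) (Ep (F x)) < e" if y: "y \<in> {0..1}" "dist y x < d" for y
  proof -
    have "\<bar>Ep (\<lambda>t. F y t - F x t)\<bar> \<le> e / 2"
      using close x y d
      by (intro abs_Ep_le continuous_intros continuous_on_unit_square_slice[OF F])
        (auto simp: dist_real_def less_imp_le)
    then show ?thesis
      using Ep_diff[OF continuous_on_unit_square_slice[OF F y(1)] continuous_on_unit_square_slice[OF F x]] e
      by (simp add: dist_real_def)
  qed
  then show "\<exists>d>0. \<forall>y\<in>{0..1}. dist y x < d \<longrightarrow> dist (Ep (F y)) (Ep (F x)) < e"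
    using d by blast
qed

lemma Ep_Ep_riemann_sum_error:
  fixes F :: "real \<Rightarrow> real \<Rightarrow> real"
  assumes F: "continuous_on ({0..1} \<times> {0..1}) (\<lambda>(x, t). F x t)" and N: "0 < N"
    and osc: "\<And>x k t. x \<in> {0..1} \<Longrightarrow> k < N \<Longrightarrow> t \<in> cell N k \<Longrightarrow>
      \<bar>F x t - F x (node N k)\<bar> \<le> e \<and> \<bar>F t x - F (node N k) x\<bar> \<le> e"
  shows "\<bar>Ep (\<lambda>x. Ep (F x)) - (\<Sum>j<N. \<Sum>k<N. cell_mass N j * cell_mass N k * F (node N j) (node N k))\<bar>
    \<le> 2 * e"
proof -
  define S where "S x = (\<Sum>k<N. cell_mass N k * F x (node N k))" for x
  have S: "continuous_on {0..1} S"
    unfolding S_def by (intro continuous_intros continuous_on_unit_square_slice'[OF F] node_in_unit_interval) auto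
  have "\<bar>Ep (F x) - S x\<bar> \<le> e" if x: "x \<in> {0..1}" for x
    unfolding S_def using osc[OF x]
    by (intro Ep_riemann_sum_error[OF continuous_on_unit_square_slice[OF F x] N]) blast
  then have outer: "\<bar>Ep (\<lambda>x. Ep (F x)) - Ep S\<bar> \<le> e"
    unfolding Ep_diff[OF continuous_on_Ep_slice[OF F] S, symmetric]
    by (intro abs_Ep_le continuous_intros continuous_on_Ep_slice[OF F] S) auto
  have inner: "\<bar>Ep (\<lambda>x. F x (node N k)) - (\<Sum>j<N. cell_mass N j * F (node N j) (node N k))\<bar> \<le> e"
    if k: "k < N" for k
    using osc[OF node_in_unit_interval[OF k]]
    by (intro Ep_riemann_sum_error[OF continuous_on_unit_square_slice'[OF F node_in_unit_interval[OF k]] N]) blast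
  have "Ep S = (\<Sum>k<N. cell_mass N k * Ep (\<lambda>x. F x (node N k)))"
    unfolding S_def
    by (subst Ep_sum) (auto simp: Ep_cmult intro!: continuous_intros continuous_on_unit_square_slice'[OF F] node_in_unit_interval)
  moreover have "(\<Sum>j<N. \<Sum>k<N. cell_mass N j * cell_mass N k * F (node N j) (node N k)) =
      (\<Sum>k<N. cell_mass N k * (\<Sum>j<N. cell_mass N j * F (node N j) (node N k)))"
    by (subst sum.swap) (simp add: sum_distrib_left ac_simps)
  ultimately have "Ep S - (\<Sum>j<N. \<Sum>k<N. cell_mass N j * cell_mass N k * F (node N j) (node N k)) =
      (\<Sum>k<N. cell_mass N k * (Ep (\<lambda>x. F x (node N k)) - (\<Sum>j<N. cell_mass N j * F (node N j) (node N k))))"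
    by (simp add: sum_subtractf right_diff_distrib)
  also have "\<bar>\<dots>\<bar> \<le> (\<Sum>k<N. cell_mass N k * e)"
  proof (intro order_trans[OF sum_abs sum_mono])
    fix k assume "k \<in> {..<N}"
    then have k: "k < N" by simp
    have "cell_mass N k * \<bar>Ep (\<lambda>x. F x (node N k)) - (\<Sum>j<N. cell_mass N j * F (node N j) (node N k))\<bar>
        \<le> cell_mass N k * e"
      using inner[OF k] cell_mass_nonneg[OF k] by (rule mult_left_mono)
    then show "\<bar>cell_mass N k * (Ep (\<lambda>x. F x (node N k)) - (\<Sum>j<N. cell_mass N j * F (node N j) (node N k)))\<bar>
        \<le> cell_mass N k * e"
      using cell_mass_nonneg[OF k] by (simp add: abs_mult)
  qed
  also have "\<dots> = e" unfolding sum_distrib_right[symmetric] sum_cell_mass[OF N] by simp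
  finally show ?thesis using outer by linarith
qed

lemma LIMSEQ_double_riemann_sum:
  fixes F :: "real \<Rightarrow> real \<Rightarrow> real"
  assumes F: "continuous_on ({0..1} \<times> {0..1}) (\<lambda>(x, t). F x t)"
  shows "(\<lambda>N. \<Sum>j<N. \<Sum>k<N. cell_mass N j * cell_mass N k * F (node N j) (node N k))
           \<longlonglongrightarrow> Ep (\<lambda>x. Ep (F x))"
proof (rule LIMSEQ_I)
  fix e :: real assume e: "0 < e"
  obtain d where d: "0 < d" and close: "\<And>x y t s. x \<in> {0..1} \<Longrightarrow> y \<in> {0..1} \<Longrightarrow> t \<in> {0..1} \<Longrightarrow>
      s \<in> {0..1} \<Longrightarrow> \<bar>y - x\<bar> < d \<Longrightarrow> \<bar>s - t\<bar> < d \<Longrightarrow> \<bar>F y s - F x t\<bar> < e / 4"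
    using uniformly_continuous_on_unit_square[OF F, of "e / 4"] e by auto
  obtain N0 :: nat where N0: "1 / d < real N0"
    using reals_Archimedean2 by blast
  have "\<bar>(\<Sum>j<N. \<Sum>k<N. cell_mass N j * cell_mass N k * F (node N j) (node N k)) - Ep (\<lambda>x. Ep (F x))\<bar> < e"
    if N: "N0 \<le> N" for N
  proof -
    have "1 / d < real N" using N N0 by linarith
    moreover have "0 < 1 / d" using d by simp
    ultimately have N_pos: "0 < N" by linarith
    from \<open>1 / d < real N\<close> have "1 < real N * d" using d by (simp add: field_simps)
    then have mesh: "1 / real N < d" using N_pos by (simp add: field_simps)
    have "\<bar>F x t - F x (node N k)\<bar> \<le> e / 4 \<and> \<bar>F t x - F (node N k) x\<bar> \<le> e / 4"
      if "x \<in> {0..1}" "k < N" "t \<in> cell N k" for x k t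
    proof -
      have "\<bar>t - node N k\<bar> < d" using dist_node_le[OF that(3)] mesh by linarith
      then show ?thesis
        using close[of x x "node N k" t] close[of "node N k" t x x] that d node_in_unit_interval[OF that(2)]
          cell_subset_unit_interval[OF that(2)] by fastforce
    qed
    from Ep_Ep_riemann_sum_error[OF F N_pos this] e show ?thesis by linarith
  qed
  then show "\<exists>N0. \<forall>N\<ge>N0. norm ((\<Sum>j<N. \<Sum>k<N. cell_mass N j * cell_mass N k * F (node N j) (node N k)) -
      Ep (\<lambda>x. Ep (F x))) < e"
    by (intro exI[of _ N0]) simp
qed

lemma Ep_abs_diff_tendsto_zero:
  assumes lim: "uniform_limit {0..1} f g sequentially"
    and f: "\<And>n. continuous_on {0..1} (f n)" and g: "continuous_on {0..1} g"
  shows "(\<lambda>n. Ep (\<lambda>x. \<bar>f n x - g x\<bar>)) \<longlonglongrightarrow> 0"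
proof (rule tendstoI)
  fix e :: real assume e: "0 < e"
  have "\<forall>\<^sub>F n in sequentially. \<forall>x\<in>{0..1}. dist (f n x) (g x) < e / 2"
    using uniform_limitD[OF lim, of "e / 2"] e by simp
  then show "\<forall>\<^sub>F n in sequentially. dist (Ep (\<lambda>x. \<bar>f n x - g x\<bar>)) 0 < e"
  proof eventually_elim
    case (elim n)
    have "\<bar>Ep (\<lambda>x. \<bar>f n x - g x\<bar>)\<bar> \<le> e / 2"
      using elim f g by (intro abs_Ep_le continuous_intros) (auto simp: dist_real_def less_imp_le)
    then show ?case using e by simp
  qed
qed

end

section \<open>The kernel integral operator\<close>

lemma quadratic_nonneg_imp_discriminant_le:
  fixes A B C :: real
  assumes nonneg: "\<And>s. 0 \<le> A + 2 * B * s + C * s\<^sup>2" and C: "0 \<le> C"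
  shows "B\<^sup>2 \<le> A * C"
proof (cases "C = 0")
  case True
  have "B = 0"
  proof (rule ccontr)
    assume "B \<noteq> 0"
    then have "A + 2 * B * (- (A + 1) / (2 * B)) = -1" by (simp add: field_simps)
    then show False using nonneg[of "- (A + 1) / (2 * B)"] True by simp
  qed
  then show ?thesis using True by simp
next
  case False
  then have "0 < C" using C by simp
  moreover have "0 \<le> A + 2 * B * (- B / C) + C * (- B / C)\<^sup>2" by (rule nonneg)
  ultimately show ?thesis by (simp add: field_simps power2_eq_square)
qed

locale psd_kernel_operator = unit_interval_density +
  fixes K :: "real \<Rightarrow> real \<Rightarrow> real"
  assumes kernel_continuous: "continuous_on ({0..1} \<times> {0..1}) (\<lambda>(x, t). K x t)"
    and kernel_pd: "pd_kernel K"
begin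

lemma kernel_symmetric: "x \<in> {0..1} \<Longrightarrow> t \<in> {0..1} \<Longrightarrow> K x t = K t x"
  using kernel_pd unfolding pd_kernel_def by blast

lemma kernel_quadratic_form_nonneg:
  fixes n :: nat and z c :: "nat \<Rightarrow> real"
  shows "(\<forall>i<n. z i \<in> {0..1}) \<Longrightarrow> 0 \<le> (\<Sum>i<n. \<Sum>j<n. c i * c j * K (z i) (z j))"
  using kernel_pd unfolding pd_kernel_def by blast

lemma kernel_bounded:
  obtains \<kappa> where "\<And>x t. x \<in> {0..1} \<Longrightarrow> t \<in> {0..1} \<Longrightarrow> \<bar>K x t\<bar> \<le> \<kappa>"
proof -
  have "compact ((\<lambda>(x, t). K x t) ` ({0..1} \<times> {0..1}))"
    by (intro compact_continuous_image kernel_continuous compact_Times) auto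
  then obtain B where B: "\<forall>z\<in>(\<lambda>(x, t). K x t) ` ({0..1} \<times> {0..1}). norm z \<le> B"
    using compact_imp_bounded bounded_iff by metis
  have "\<bar>K x t\<bar> \<le> B" if "x \<in> {0..1}" "t \<in> {0..1}" for x t
  proof -
    have "K x t \<in> (\<lambda>(x, t). K x t) ` ({0..1} \<times> {0..1})" using that by force
    then show ?thesis using B by fastforce
  qed
  then show ?thesis by (rule that)
qed

lemma LK_eq_Ep: "LK K p u x = Ep (\<lambda>t. K x t * u t)"
  unfolding LK_def Ep_def by simp

lemma continuous_on_kernel_mult:
  assumes "continuous_on {0..1} u"
  shows "continuous_on ({0..1} \<times> {0..1}) (\<lambda>(x, t). K x t * u t)"
proof -
  have "continuous_on ({0..1} \<times> {0..1}) (\<lambda>z. (\<lambda>(x, t). K x t) z * u (snd z))"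
    by (intro continuous_intros kernel_continuous continuous_on_compose2[OF assms]) auto
  then show ?thesis by (simp add: case_prod_beta)
qed

lemma continuous_on_kernel_slice: "x \<in> {0..1} \<Longrightarrow> continuous_on {0..1} (K x)"
  using continuous_on_unit_square_slice[OF kernel_continuous] .

lemma continuous_on_LK: "continuous_on {0..1} u \<Longrightarrow> continuous_on {0..1} (LK K p u)"
  unfolding LK_eq_Ep[abs_def] using continuous_on_Ep_slice[OF continuous_on_kernel_mult] by simp

lemma LK_add:
  "continuous_on {0..1} u \<Longrightarrow> continuous_on {0..1} v \<Longrightarrow> x \<in> {0..1} \<Longrightarrow>
    LK K p (\<lambda>t. u t + v t) x = LK K p u x + LK K p v x"
  unfolding LK_eq_Ep distrib_left by (intro Ep_add continuous_intros continuous_on_kernel_slice)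

lemma LK_diff:
  "continuous_on {0..1} u \<Longrightarrow> continuous_on {0..1} v \<Longrightarrow> x \<in> {0..1} \<Longrightarrow>
    LK K p (\<lambda>t. u t - v t) x = LK K p u x - LK K p v x"
  unfolding LK_eq_Ep right_diff_distrib by (intro Ep_diff continuous_intros continuous_on_kernel_slice)

lemma LK_cmult: "LK K p (\<lambda>t. c * u t) x = c * LK K p u x"
  unfolding LK_eq_Ep Ep_cmult[symmetric] by (simp add: ac_simps)

lemma LK_sum:
  "finite A \<Longrightarrow> (\<And>k. k \<in> A \<Longrightarrow> continuous_on {0..1} (f k)) \<Longrightarrow> x \<in> {0..1} \<Longrightarrow>
    LK K p (\<lambda>t. \<Sum>k\<in>A. f k t) x = (\<Sum>k\<in>A. LK K p (f k) x)"
  unfolding LK_eq_Ep sum_distrib_left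
  by (intro Ep_sum) (auto intro!: continuous_intros continuous_on_kernel_slice)

lemma Ep_LK_mult_eq_Ep_Ep: "Ep (\<lambda>x. LK K p u x * v x) = Ep (\<lambda>x. Ep (\<lambda>t. K x t * u t * v x))"
proof (rule Ep_cong)
  fix x
  show "LK K p u x * v x = Ep (\<lambda>t. K x t * u t * v x)"
    using Ep_cmult[of "v x" "\<lambda>t. K x t * u t"] unfolding LK_eq_Ep by (simp add: ac_simps)
qed

lemma continuous_on_kernel_bilinear:
  assumes u: "continuous_on {0..1} u" and v: "continuous_on {0..1} v"
  shows "continuous_on ({0..1} \<times> {0..1}) (\<lambda>(x, t). K x t * u t * v x)"
proof -
  have "continuous_on ({0..1} \<times> {0..1}) (\<lambda>z. (\<lambda>(x, t). K x t) z * u (snd z) * v (fst z))"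
    by (intro continuous_intros kernel_continuous continuous_on_compose2[OF u] continuous_on_compose2[OF v]) auto
  then show ?thesis by (simp add: case_prod_beta)
qed

text \<open>Positivity and symmetry of \<open>L\<^sub>K\<close> are inherited from the kernel matrices of the Riemann sums.\<close>
lemma Ep_LK_mult_self_nonneg:
  assumes u: "continuous_on {0..1} u"
  shows "0 \<le> Ep (\<lambda>x. LK K p u x * u x)"
proof -
  define F where "F x t = K x t * u t * u x" for x t
  have lim: "(\<lambda>N. \<Sum>j<N. \<Sum>k<N. cell_mass N j * cell_mass N k * F (node N j) (node N k))
      \<longlonglongrightarrow> Ep (\<lambda>x. LK K p u x * u x)"
    unfolding Ep_LK_mult_eq_Ep_Ep F_def using LIMSEQ_double_riemann_sum[OF continuous_on_kernel_bilinear[OF u u]]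
    by simp
  have "0 \<le> (\<Sum>j<N. \<Sum>k<N. cell_mass N j * cell_mass N k * F (node N j) (node N k))" for N
  proof -
    have "0 \<le> (\<Sum>j<N. \<Sum>k<N. (cell_mass N j * u (node N j)) * (cell_mass N k * u (node N k)) *
        K (node N j) (node N k))"
      using node_in_unit_interval by (intro kernel_quadratic_form_nonneg) auto
    then show ?thesis unfolding F_def by (simp only: ac_simps)
  qed
  then show ?thesis using LIMSEQ_le_const[OF lim] by blast
qed

lemma Ep_LK_mult_commute:
  assumes u: "continuous_on {0..1} u" and v: "continuous_on {0..1} v"
  shows "Ep (\<lambda>x. LK K p u x * v x) = Ep (\<lambda>x. u x * LK K p v x)"
proof -
  define D where "D F N = (\<Sum>j<N. \<Sum>k<N. cell_mass N j * cell_mass N k * F (node N j) (node N k))"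
    for F :: "real \<Rightarrow> real \<Rightarrow> real" and N
  have lim_uv: "D (\<lambda>x t. K x t * u t * v x) \<longlonglongrightarrow> Ep (\<lambda>x. LK K p u x * v x)"
    unfolding Ep_LK_mult_eq_Ep_Ep D_def using LIMSEQ_double_riemann_sum[OF continuous_on_kernel_bilinear[OF u v]]
    by simp
  have "Ep (\<lambda>x. u x * LK K p v x) = Ep (\<lambda>x. Ep (\<lambda>t. K x t * v t * u x))"
    using Ep_LK_mult_eq_Ep_Ep[of v u] by (simp add: mult.commute)
  then have lim_vu: "D (\<lambda>x t. K x t * v t * u x) \<longlonglongrightarrow> Ep (\<lambda>x. u x * LK K p v x)"
    unfolding D_def by (simp only:) (rule LIMSEQ_double_riemann_sum[OF continuous_on_kernel_bilinear[OF v u]])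
  have "D (\<lambda>x t. K x t * u t * v x) = D (\<lambda>x t. K x t * v t * u x)"
  proof
    fix N
    show "D (\<lambda>x t. K x t * u t * v x) N = D (\<lambda>x t. K x t * v t * u x) N"
      unfolding D_def
    proof (rule trans[OF _ sum.swap], intro sum.cong refl)
      fix j k assume "j \<in> {..<N}" "k \<in> {..<N}"
      then have "K (node N j) (node N k) = K (node N k) (node N j)"
        using kernel_symmetric node_in_unit_interval by simp
      then show "cell_mass N j * cell_mass N k * (K (node N j) (node N k) * u (node N k) * v (node N j)) =
          cell_mass N k * cell_mass N j * (K (node N k) (node N j) * v (node N j) * u (node N k))"
        by (simp add: ac_simps)
    qed
  qed
  with lim_uv have "D (\<lambda>x t. K x t * v t * u x) \<longlonglongrightarrow> Ep (\<lambda>x. LK K p u x * v x)" by simp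
  then show ?thesis using lim_vu by (rule LIMSEQ_unique)
qed

lemma Ep_LK_cauchy_schwarz:
  assumes u: "continuous_on {0..1} u" and v: "continuous_on {0..1} v"
  shows "(Ep (\<lambda>x. LK K p u x * v x))\<^sup>2 \<le> Ep (\<lambda>x. LK K p u x * u x) * Ep (\<lambda>x. LK K p v x * v x)"
proof (rule quadratic_nonneg_imp_discriminant_le)
  show "0 \<le> Ep (\<lambda>x. LK K p v x * v x)" using Ep_LK_mult_self_nonneg[OF v] .
  fix s :: real
  have Lu: "continuous_on {0..1} (LK K p u)" and Lv: "continuous_on {0..1} (LK K p v)"
    using continuous_on_LK u v by blast+
  have "0 \<le> Ep (\<lambda>x. LK K p (\<lambda>t. u t + s * v t) x * (u x + s * v x))"
    using u v by (intro Ep_LK_mult_self_nonneg continuous_intros)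
  also have "\<dots> = Ep (\<lambda>x. (LK K p u x * u x + s * (LK K p u x * v x)) +
      (s * (LK K p v x * u x) + s\<^sup>2 * (LK K p v x * v x)))"
  proof (rule Ep_cong)
    fix x :: real assume x: "x \<in> {0..1}"
    then have "LK K p (\<lambda>t. u t + s * v t) x = LK K p u x + s * LK K p v x"
      using u v by (simp add: LK_add LK_cmult continuous_intros)
    then show "LK K p (\<lambda>t. u t + s * v t) x * (u x + s * v x) = (LK K p u x * u x + s * (LK K p u x * v x)) +
        (s * (LK K p v x * u x) + s\<^sup>2 * (LK K p v x * v x))"
      by (simp add: algebra_simps power2_eq_square)
  qed
  also have "\<dots> = Ep (\<lambda>x. LK K p u x * u x) + s * Ep (\<lambda>x. LK K p u x * v x) +
      (s * Ep (\<lambda>x. LK K p v x * u x) + s\<^sup>2 * Ep (\<lambda>x. LK K p v x * v x))"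
    using u v Lu Lv by (simp add: Ep_add Ep_cmult continuous_intros)
  also have "Ep (\<lambda>x. LK K p v x * u x) = Ep (\<lambda>x. LK K p u x * v x)"
    using Ep_LK_mult_commute[OF v u] by (simp add: mult.commute)
  also have "Ep (\<lambda>x. LK K p u x * u x) + s * Ep (\<lambda>x. LK K p u x * v x) +
      (s * Ep (\<lambda>x. LK K p u x * v x) + s\<^sup>2 * Ep (\<lambda>x. LK K p v x * v x)) =
      Ep (\<lambda>x. LK K p u x * u x) + 2 * Ep (\<lambda>x. LK K p u x * v x) * s + Ep (\<lambda>x. LK K p v x * v x) * s\<^sup>2"
    by (simp add: algebra_simps)
  finally show "0 \<le> Ep (\<lambda>x. LK K p u x * u x) + 2 * Ep (\<lambda>x. LK K p u x * v x) * s +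
      Ep (\<lambda>x. LK K p v x * v x) * s\<^sup>2" .
qed

section \<open>The resolvent equation\<close>

definition resolvent_solution :: "real \<Rightarrow> (real \<Rightarrow> real) \<Rightarrow> (real \<Rightarrow> real) \<Rightarrow> bool" where
  "resolvent_solution lam h g \<longleftrightarrow> continuous_on {0..1} g \<and> (\<forall>x. x \<notin> {0..1} \<longrightarrow> g x = 0) \<and>
     (\<forall>x\<in>{0..1}. LK K p g x + lam * g x = h x)"

context
  fixes \<kappa> :: real
  assumes kernel_bound: "\<And>x t. x \<in> {0..1} \<Longrightarrow> t \<in> {0..1} \<Longrightarrow> \<bar>K x t\<bar> \<le> \<kappa>"
begin

lemma kernel_bound_nonneg: "0 \<le> \<kappa>"
  using kernel_bound[of 0 0] by simp

lemma abs_LK_le: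
  assumes u: "continuous_on {0..1} u" and x: "x \<in> {0..1}"
  shows "\<bar>LK K p u x\<bar> \<le> \<kappa> * Ep (\<lambda>t. \<bar>u t\<bar>)"
proof -
  have Ku: "continuous_on {0..1} (\<lambda>t. K x t * u t)"
    using u x by (intro continuous_intros continuous_on_kernel_slice)
  have "\<bar>LK K p u x\<bar> \<le> Ep (\<lambda>t. \<bar>K x t * u t\<bar>)"
    unfolding LK_eq_Ep using abs_Ep_le_Ep_abs[OF Ku] .
  also have "\<dots> \<le> Ep (\<lambda>t. \<kappa> * \<bar>u t\<bar>)"
  proof (rule Ep_mono)
    show "continuous_on {0..1} (\<lambda>t. \<bar>K x t * u t\<bar>)" using Ku by (rule continuous_on_rabs)
    show "continuous_on {0..1} (\<lambda>t. \<kappa> * \<bar>u t\<bar>)" using u by (intro continuous_intros)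
    fix t :: real assume "t \<in> {0..1}"
    with x have "\<bar>K x t\<bar> \<le> \<kappa>" by (rule kernel_bound)
    then show "\<bar>K x t * u t\<bar> \<le> \<kappa> * \<bar>u t\<bar>" by (simp add: abs_mult mult_right_mono)
  qed
  finally show ?thesis by (simp add: Ep_cmult)
qed

lemma abs_LK_le_sqrt_Ep_square:
  assumes u: "continuous_on {0..1} u" and x: "x \<in> {0..1}"
  shows "\<bar>LK K p u x\<bar> \<le> \<kappa> * sqrt (Ep (\<lambda>t. (u t)\<^sup>2))"
  using abs_LK_le[OF u x] mult_left_mono[OF Ep_abs_le_sqrt_Ep_square[OF u] kernel_bound_nonneg]
  by (rule order_trans)

lemma LK_tendsto:
  assumes u: "\<And>n. continuous_on {0..1} (u n)" and v: "continuous_on {0..1} v" and x: "x \<in> {0..1}"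
    and lim: "(\<lambda>n. Ep (\<lambda>t. \<bar>u n t - v t\<bar>)) \<longlonglongrightarrow> 0"
  shows "(\<lambda>n. LK K p (u n) x) \<longlonglongrightarrow> LK K p v x"
proof -
  have "norm (LK K p (u n) x - LK K p v x) \<le> \<kappa> * Ep (\<lambda>t. \<bar>u n t - v t\<bar>)" for n
  proof -
    have "LK K p (u n) x - LK K p v x = LK K p (\<lambda>t. u n t - v t) x"
      using LK_diff[OF u v x] by simp
    also have "\<bar>\<dots>\<bar> \<le> \<kappa> * Ep (\<lambda>t. \<bar>u n t - v t\<bar>)"
      using u v by (intro abs_LK_le[OF _ x] continuous_intros)
    finally show ?thesis by simp
  qed
  then have "\<forall>\<^sub>F n in sequentially. norm (LK K p (u n) x - LK K p v x) \<le> \<kappa> * Ep (\<lambda>t. \<bar>u n t - v t\<bar>)"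
    by simp
  then have "(\<lambda>n. LK K p (u n) x - LK K p v x) \<longlonglongrightarrow> 0"
    using tendsto_mult_right_zero[OF lim] by (rule Lim_null_comparison)
  then show ?thesis by (simp only: LIM_zero_iff)
qed

lemma Ep_LK_square_le:
  assumes u: "continuous_on {0..1} u"
  shows "Ep (\<lambda>x. (LK K p u x)\<^sup>2) \<le> \<kappa> * Ep (\<lambda>x. LK K p u x * u x)"
proof -
  define w where "w = LK K p u"
  have w: "continuous_on {0..1} w" unfolding w_def using continuous_on_LK[OF u] .
  define A where "A = Ep (\<lambda>x. LK K p u x * u x)"
  define B where "B = Ep (\<lambda>x. (w x)\<^sup>2)"
  have A: "0 \<le> A" unfolding A_def using Ep_LK_mult_self_nonneg[OF u] .
  have B: "0 \<le> B" unfolding B_def using w by (intro Ep_nonneg continuous_intros) auto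
  have "Ep (\<lambda>x. LK K p u x * w x) = B"
    unfolding B_def w_def by (simp add: power2_eq_square)
  then have "B\<^sup>2 \<le> A * Ep (\<lambda>x. LK K p w x * w x)"
    using Ep_LK_cauchy_schwarz[OF u w] unfolding A_def by simp
  also have "\<dots> \<le> A * (\<kappa> * B)"
  proof (rule mult_left_mono[OF _ A])
    have "Ep (\<lambda>x. LK K p w x * w x) \<le> Ep (\<lambda>x. \<kappa> * sqrt B * \<bar>w x\<bar>)"
    proof (rule Ep_mono)
      show "continuous_on {0..1} (\<lambda>x. LK K p w x * w x)"
        using w continuous_on_LK[OF w] by (intro continuous_intros)
      show "continuous_on {0..1} (\<lambda>x. \<kappa> * sqrt B * \<bar>w x\<bar>)" using w by (intro continuous_intros)
      fix x :: real assume x: "x \<in> {0..1}"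
      have "LK K p w x * w x \<le> \<bar>LK K p w x\<bar> * \<bar>w x\<bar>" by (simp add: abs_mult[symmetric])
      also have "\<dots> \<le> \<kappa> * sqrt B * \<bar>w x\<bar>"
        using abs_LK_le_sqrt_Ep_square[OF w x] unfolding B_def by (intro mult_right_mono) auto
      finally show "LK K p w x * w x \<le> \<kappa> * sqrt B * \<bar>w x\<bar>" .
    qed
    also have "\<dots> = \<kappa> * sqrt B * Ep (\<lambda>x. \<bar>w x\<bar>)" by (rule Ep_cmult)
    also have "\<dots> \<le> \<kappa> * sqrt B * sqrt B"
      using Ep_abs_le_sqrt_Ep_square[OF w] kernel_bound_nonneg B unfolding B_def by (intro mult_left_mono) auto
    also have "\<dots> = \<kappa> * B" using B by simp
    finally show "Ep (\<lambda>x. LK K p w x * w x) \<le> \<kappa> * B" .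
  qed
  finally have "B * B \<le> (\<kappa> * A) * B" by (simp add: power2_eq_square ac_simps)
  then have "B \<le> \<kappa> * A"
    using A B kernel_bound_nonneg by (cases "B = 0") (auto simp: mult_le_cancel_right)
  then show ?thesis unfolding A_def B_def w_def .
qed

lemma Ep_square_shifted_LK_le:
  assumes r: "continuous_on {0..1} r"
  shows "Ep (\<lambda>x. (\<kappa> * r x - LK K p r x)\<^sup>2) \<le> \<kappa>\<^sup>2 * Ep (\<lambda>x. (r x)\<^sup>2)"
proof -
  have Lr: "continuous_on {0..1} (LK K p r)" using continuous_on_LK[OF r] .
  have "Ep (\<lambda>x. (\<kappa> * r x - LK K p r x)\<^sup>2) =
      Ep (\<lambda>x. (\<kappa>\<^sup>2 * (r x)\<^sup>2 - 2 * \<kappa> * (LK K p r x * r x)) + (LK K p r x)\<^sup>2)"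
    by (rule Ep_cong) (simp add: power2_eq_square algebra_simps)
  also have "\<dots> = \<kappa>\<^sup>2 * Ep (\<lambda>x. (r x)\<^sup>2) - 2 * \<kappa> * Ep (\<lambda>x. LK K p r x * r x) + Ep (\<lambda>x. (LK K p r x)\<^sup>2)"
    using r Lr by (simp add: Ep_add Ep_diff Ep_cmult continuous_intros)
  finally show ?thesis
    using Ep_LK_square_le[OF r] mult_nonneg_nonneg[OF kernel_bound_nonneg Ep_LK_mult_self_nonneg[OF r]]
    by linarith
qed

lemma resolvent_solution_unique:
  assumes lam: "0 < lam" and g1: "resolvent_solution lam h g1" and g2: "resolvent_solution lam h g2"
  shows "g1 = g2"
proof -
  define d where "d x = g1 x - g2 x" for x
  have c1: "continuous_on {0..1} g1" and c2: "continuous_on {0..1} g2"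
    using g1 g2 unfolding resolvent_solution_def by auto
  have d: "continuous_on {0..1} d" unfolding d_def using c1 c2 by (intro continuous_intros)
  have LK_d: "LK K p d x = - lam * d x" if x: "x \<in> {0..1}" for x
  proof -
    have "LK K p g1 x + lam * g1 x = h x" "LK K p g2 x + lam * g2 x = h x"
      using g1 g2 x unfolding resolvent_solution_def by auto
    moreover have "- lam * d x = lam * g2 x - lam * g1 x" unfolding d_def by (simp add: algebra_simps)
    ultimately show ?thesis unfolding d_def LK_diff[OF c1 c2 x] by linarith
  qed
  have "0 \<le> Ep (\<lambda>x. LK K p d x * d x)" using Ep_LK_mult_self_nonneg[OF d] .
  also have "\<dots> = - lam * Ep (\<lambda>x. (d x)\<^sup>2)"
    unfolding Ep_cmult[symmetric] by (rule Ep_cong) (simp add: LK_d power2_eq_square)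
  finally have "Ep (\<lambda>x. (d x)\<^sup>2) \<le> 0" using lam by (simp add: mult_le_0_iff)
  then have "Ep (\<lambda>x. (d x)\<^sup>2) = 0"
    using Ep_nonneg[of "\<lambda>x. (d x)\<^sup>2"] d by (auto intro: continuous_intros)
  then have "d x = 0" if "x \<in> {0..1}" for x
    using abs_LK_le_sqrt_Ep_square[OF d that] LK_d[OF that] lam by simp
  then show ?thesis
    using g1 g2 unfolding resolvent_solution_def d_def fun_eq_iff by (metis eq_iff_diff_eq_0)
qed

text \<open>The solution is the Neumann series \<open>(\<kappa> + \<lambda>)\<inverse> \<Sum>\<^sub>n ((\<kappa> - L\<^sub>K) / (\<kappa> + \<lambda>))\<^sup>n h\<close>,
  which converges in \<open>L\<^sup>2(p)\<close> because \<open>0 \<le> L\<^sub>K \<le> \<kappa>\<close>; applying \<open>L\<^sub>K\<close> turns this into uniform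
  convergence.\<close>
context
  fixes lam :: real and h :: "real \<Rightarrow> real"
  assumes lam_pos: "0 < lam" and h_continuous: "continuous_on {0..1} h"
begin

primrec neumann_term :: "nat \<Rightarrow> real \<Rightarrow> real" where
  "neumann_term 0 = h"
| "neumann_term (Suc n) = (\<lambda>x. (\<kappa> * neumann_term n x - LK K p (neumann_term n) x) / (\<kappa> + lam))"

lemma continuous_on_neumann_term: "continuous_on {0..1} (neumann_term n)"
proof (induction n)
  case 0
  then show ?case using h_continuous by simp
next
  case (Suc n)
  then show ?case using lam_pos kernel_bound_nonneg by (auto intro!: continuous_intros continuous_on_LK)
qed

lemma neumann_term_L2_le:
  "sqrt (Ep (\<lambda>x. (neumann_term n x)\<^sup>2)) \<le> (\<kappa> / (\<kappa> + lam)) ^ n * sqrt (Ep (\<lambda>x. (h x)\<^sup>2))"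
proof (induction n)
  case 0
  then show ?case by simp
next
  case (Suc n)
  define c where "c = \<kappa> + lam"
  have c: "0 < c" unfolding c_def using lam_pos kernel_bound_nonneg by simp
  have "Ep (\<lambda>x. (neumann_term (Suc n) x)\<^sup>2) =
      (1 / c\<^sup>2) * Ep (\<lambda>x. (\<kappa> * neumann_term n x - LK K p (neumann_term n) x)\<^sup>2)"
    unfolding Ep_cmult[symmetric] by (rule Ep_cong) (simp add: c_def power_divide)
  also have "\<dots> \<le> (1 / c\<^sup>2) * (\<kappa>\<^sup>2 * Ep (\<lambda>x. (neumann_term n x)\<^sup>2))"
    using Ep_square_shifted_LK_le[OF continuous_on_neumann_term] by (intro mult_left_mono) auto
  also have "\<dots> = (\<kappa> / c)\<^sup>2 * Ep (\<lambda>x. (neumann_term n x)\<^sup>2)"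
    by (simp add: power_divide)
  finally have "sqrt (Ep (\<lambda>x. (neumann_term (Suc n) x)\<^sup>2)) \<le> sqrt ((\<kappa> / c)\<^sup>2 * Ep (\<lambda>x. (neumann_term n x)\<^sup>2))"
    by (rule real_sqrt_le_mono)
  also have "\<dots> = \<kappa> / c * sqrt (Ep (\<lambda>x. (neumann_term n x)\<^sup>2))"
    using c kernel_bound_nonneg by (simp add: real_sqrt_mult)
  also have "\<dots> \<le> \<kappa> / c * ((\<kappa> / c) ^ n * sqrt (Ep (\<lambda>x. (h x)\<^sup>2)))"
    using Suc c kernel_bound_nonneg by (intro mult_left_mono) (auto simp: c_def)
  finally show ?case by (simp add: c_def)
qed

definition neumann_partial_sum :: "nat \<Rightarrow> real \<Rightarrow> real" where
  "neumann_partial_sum n x = (\<Sum>k<n. neumann_term k x / (\<kappa> + lam))"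

definition LK_neumann_series :: "real \<Rightarrow> real" where
  "LK_neumann_series x = (\<Sum>k. LK K p (neumann_term k) x / (\<kappa> + lam))"

definition neumann_solution :: "real \<Rightarrow> real" where
  "neumann_solution x = (if x \<in> {0..1} then (h x - LK_neumann_series x) / lam else 0)"

lemma continuous_on_neumann_partial_sum: "continuous_on {0..1} (neumann_partial_sum n)"
  unfolding neumann_partial_sum_def[abs_def] using continuous_on_neumann_term
  by (intro continuous_intros) (use lam_pos kernel_bound_nonneg in auto)

lemma LK_neumann_partial_sum:
  assumes x: "x \<in> {0..1}"
  shows "LK K p (neumann_partial_sum n) x = (\<Sum>k<n. LK K p (neumann_term k) x / (\<kappa> + lam))"
proof -
  have "\<kappa> + lam \<noteq> 0" using lam_pos kernel_bound_nonneg by simp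
  then show ?thesis
    unfolding neumann_partial_sum_def[abs_def] using x LK_cmult[of "1 / (\<kappa> + lam)"] continuous_on_neumann_term
    by (subst LK_sum) (auto intro!: continuous_intros)
qed

lemma neumann_partial_sum_equation:
  assumes x: "x \<in> {0..1}"
  shows "LK K p (neumann_partial_sum n) x + lam * neumann_partial_sum n x = h x - neumann_term n x"
proof -
  have c: "\<kappa> + lam \<noteq> 0" using lam_pos kernel_bound_nonneg by simp
  have step: "LK K p (neumann_term k) x / (\<kappa> + lam) + lam * (neumann_term k x / (\<kappa> + lam)) =
      neumann_term k x - neumann_term (Suc k) x" for k
  proof -
    have "neumann_term k x - neumann_term (Suc k) x =
        ((\<kappa> + lam) * neumann_term k x - (\<kappa> * neumann_term k x - LK K p (neumann_term k) x)) / (\<kappa> + lam)"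
      using c by (simp add: field_simps)
    also have "\<dots> = (LK K p (neumann_term k) x + lam * neumann_term k x) / (\<kappa> + lam)"
      by (simp add: algebra_simps)
    finally show ?thesis by (simp add: add_divide_distrib)
  qed
  have "LK K p (neumann_partial_sum n) x + lam * neumann_partial_sum n x =
      (\<Sum>k<n. LK K p (neumann_term k) x / (\<kappa> + lam) + lam * (neumann_term k x / (\<kappa> + lam)))"
    unfolding LK_neumann_partial_sum[OF x] by (simp add: neumann_partial_sum_def sum_distrib_left sum.distrib)
  also have "\<dots> = (\<Sum>k<n. neumann_term k x - neumann_term (Suc k) x)"
    by (intro sum.cong refl step)
  also have "\<dots> = h x - neumann_term n x"
    using sum_lessThan_telescope'[of "\<lambda>k. neumann_term k x" n] by simp
  finally show ?thesis .
qed

lemma uniform_limit_LK_neumann_partial_sum: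
  "uniform_limit {0..1} (\<lambda>n. LK K p (neumann_partial_sum n)) LK_neumann_series sequentially"
proof -
  define q where "q = \<kappa> / (\<kappa> + lam)"
  define H where "H = sqrt (Ep (\<lambda>x. (h x)\<^sup>2))"
  have q: "0 \<le> q" "q < 1" unfolding q_def using lam_pos kernel_bound_nonneg by auto
  have "norm (LK K p (neumann_term k) x / (\<kappa> + lam)) \<le> \<kappa> * q ^ k * H / (\<kappa> + lam)"
    if "x \<in> {0..1}" for k x
  proof -
    have "\<bar>LK K p (neumann_term k) x\<bar> \<le> \<kappa> * (q ^ k * H)"
      using abs_LK_le_sqrt_Ep_square[OF continuous_on_neumann_term that] neumann_term_L2_le[of k]
        mult_left_mono[OF _ kernel_bound_nonneg] unfolding q_def H_def by (meson order_trans)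
    then show ?thesis using lam_pos kernel_bound_nonneg by (simp add: divide_right_mono abs_divide)
  qed
  moreover have "summable (\<lambda>k. \<kappa> * q ^ k * H / (\<kappa> + lam))"
    using q by (intro summable_divide summable_mult summable_mult2 summable_geometric) simp
  ultimately have "uniform_limit {0..1} (\<lambda>n x. \<Sum>k<n. LK K p (neumann_term k) x / (\<kappa> + lam))
      LK_neumann_series sequentially"
    unfolding LK_neumann_series_def[abs_def] by (rule Weierstrass_m_test)
  moreover have "uniform_limit {0..1} (\<lambda>n x. \<Sum>k<n. LK K p (neumann_term k) x / (\<kappa> + lam))
      LK_neumann_series sequentially \<longleftrightarrow>
    uniform_limit {0..1} (\<lambda>n. LK K p (neumann_partial_sum n)) LK_neumann_series sequentially"
    by (intro uniform_limit_cong') (simp_all add: LK_neumann_partial_sum)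
  ultimately show ?thesis by simp
qed

lemma continuous_on_LK_neumann_series: "continuous_on {0..1} LK_neumann_series"
  using continuous_on_neumann_partial_sum
  by (intro uniform_limit_theorem[OF _ uniform_limit_LK_neumann_partial_sum])
    (auto intro!: always_eventually continuous_on_LK)

lemma continuous_on_neumann_solution: "continuous_on {0..1} neumann_solution"
proof (rule continuous_on_eq)
  show "continuous_on {0..1} (\<lambda>x. (h x - LK_neumann_series x) / lam)"
    using h_continuous continuous_on_LK_neumann_series lam_pos by (intro continuous_intros) auto
qed (simp add: neumann_solution_def)

lemma Ep_abs_neumann_term_tendsto_zero: "(\<lambda>n. Ep (\<lambda>x. \<bar>neumann_term n x\<bar>)) \<longlonglongrightarrow> 0"
proof (rule Lim_null_comparison[OF always_eventually])
  have q: "0 \<le> \<kappa> / (\<kappa> + lam)" "\<kappa> / (\<kappa> + lam) < 1" using lam_pos kernel_bound_nonneg by auto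
  then have "norm (\<kappa> / (\<kappa> + lam)) < 1" by (simp only: real_norm_def abs_of_nonneg[OF q(1)])
  show "\<forall>n. norm (Ep (\<lambda>x. \<bar>neumann_term n x\<bar>)) \<le> (\<kappa> / (\<kappa> + lam)) ^ n * sqrt (Ep (\<lambda>x. (h x)\<^sup>2))"
  proof
    fix n
    have "0 \<le> Ep (\<lambda>x. \<bar>neumann_term n x\<bar>)"
      using continuous_on_neumann_term by (intro Ep_nonneg continuous_intros) auto
    moreover have "Ep (\<lambda>x. \<bar>neumann_term n x\<bar>) \<le> (\<kappa> / (\<kappa> + lam)) ^ n * sqrt (Ep (\<lambda>x. (h x)\<^sup>2))"
      using Ep_abs_le_sqrt_Ep_square[OF continuous_on_neumann_term] neumann_term_L2_le by (rule order_trans)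
    ultimately show "norm (Ep (\<lambda>x. \<bar>neumann_term n x\<bar>)) \<le> (\<kappa> / (\<kappa> + lam)) ^ n * sqrt (Ep (\<lambda>x. (h x)\<^sup>2))"
      by simp
  qed
  show "(\<lambda>n. (\<kappa> / (\<kappa> + lam)) ^ n * sqrt (Ep (\<lambda>x. (h x)\<^sup>2))) \<longlonglongrightarrow> 0"
    by (intro tendsto_mult_left_zero LIMSEQ_power_zero) fact
qed

lemma abs_neumann_partial_sum_minus_solution_le:
  assumes x: "x \<in> {0..1}"
  shows "\<bar>neumann_partial_sum n x - neumann_solution x\<bar> \<le>
    1 / lam * (\<bar>LK K p (neumann_partial_sum n) x - LK_neumann_series x\<bar> + \<bar>neumann_term n x\<bar>)"
proof -
  have "neumann_partial_sum n x - neumann_solution x =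
      (LK_neumann_series x - LK K p (neumann_partial_sum n) x - neumann_term n x) / lam"
    using neumann_partial_sum_equation[OF x, of n] x lam_pos
    unfolding neumann_solution_def by (simp add: field_simps)
  then have "\<bar>neumann_partial_sum n x - neumann_solution x\<bar> =
      \<bar>LK_neumann_series x - LK K p (neumann_partial_sum n) x - neumann_term n x\<bar> / lam"
    using lam_pos by (simp add: abs_divide)
  also have "\<dots> \<le> (\<bar>LK K p (neumann_partial_sum n) x - LK_neumann_series x\<bar> + \<bar>neumann_term n x\<bar>) / lam"
    using lam_pos by (intro divide_right_mono) arith+
  finally show ?thesis by simp
qed

lemma Ep_abs_neumann_partial_sum_tendsto:
  "(\<lambda>n. Ep (\<lambda>x. \<bar>neumann_partial_sum n x - neumann_solution x\<bar>)) \<longlonglongrightarrow> 0"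
proof (rule Lim_null_comparison[OF always_eventually])
  have LKS: "continuous_on {0..1} (LK K p (neumann_partial_sum n))" for n
    using continuous_on_LK[OF continuous_on_neumann_partial_sum] .
  note continuous = continuous_on_neumann_partial_sum continuous_on_neumann_solution LKS
    continuous_on_LK_neumann_series continuous_on_neumann_term
  show "\<forall>n. norm (Ep (\<lambda>x. \<bar>neumann_partial_sum n x - neumann_solution x\<bar>)) \<le>
      1 / lam * (Ep (\<lambda>x. \<bar>LK K p (neumann_partial_sum n) x - LK_neumann_series x\<bar>) +
        Ep (\<lambda>x. \<bar>neumann_term n x\<bar>))"
  proof
    fix n
    have "Ep (\<lambda>x. \<bar>neumann_partial_sum n x - neumann_solution x\<bar>) \<le>
        Ep (\<lambda>x. 1 / lam * (\<bar>LK K p (neumann_partial_sum n) x - LK_neumann_series x\<bar> + \<bar>neumann_term n x\<bar>))"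
      using continuous abs_neumann_partial_sum_minus_solution_le by (intro Ep_mono continuous_intros) auto
    also have "\<dots> = 1 / lam * (Ep (\<lambda>x. \<bar>LK K p (neumann_partial_sum n) x - LK_neumann_series x\<bar>) +
        Ep (\<lambda>x. \<bar>neumann_term n x\<bar>))"
      using continuous by (simp only: Ep_cmult Ep_add continuous_on_rabs continuous_on_diff)
    moreover have "0 \<le> Ep (\<lambda>x. \<bar>neumann_partial_sum n x - neumann_solution x\<bar>)"
      using continuous by (intro Ep_nonneg continuous_intros) auto
    ultimately show "norm (Ep (\<lambda>x. \<bar>neumann_partial_sum n x - neumann_solution x\<bar>)) \<le>
        1 / lam * (Ep (\<lambda>x. \<bar>LK K p (neumann_partial_sum n) x - LK_neumann_series x\<bar>) +
          Ep (\<lambda>x. \<bar>neumann_term n x\<bar>))"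
      by simp
  qed
  have LK_conv: "(\<lambda>n. Ep (\<lambda>x. \<bar>LK K p (neumann_partial_sum n) x - LK_neumann_series x\<bar>)) \<longlonglongrightarrow> 0"
    using continuous by (intro Ep_abs_diff_tendsto_zero[OF uniform_limit_LK_neumann_partial_sum])
  show "(\<lambda>n. 1 / lam * (Ep (\<lambda>x. \<bar>LK K p (neumann_partial_sum n) x - LK_neumann_series x\<bar>) +
      Ep (\<lambda>x. \<bar>neumann_term n x\<bar>))) \<longlonglongrightarrow> 0"
    by (rule tendsto_mult_right_zero[OF tendsto_add_zero[OF LK_conv Ep_abs_neumann_term_tendsto_zero]])
qed

lemma resolvent_solution_exists: "\<exists>g. resolvent_solution lam h g"
proof -
  have LK_solution: "LK K p neumann_solution x = LK_neumann_series x" if x: "x \<in> {0..1}" for x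
  proof (rule LIMSEQ_unique)
    show "(\<lambda>n. LK K p (neumann_partial_sum n) x) \<longlonglongrightarrow> LK K p neumann_solution x"
      by (rule LK_tendsto[OF continuous_on_neumann_partial_sum continuous_on_neumann_solution x
            Ep_abs_neumann_partial_sum_tendsto])
    show "(\<lambda>n. LK K p (neumann_partial_sum n) x) \<longlonglongrightarrow> LK_neumann_series x"
      by (rule tendsto_uniform_limitI[OF uniform_limit_LK_neumann_partial_sum x])
  qed
  have "resolvent_solution lam h neumann_solution"
    unfolding resolvent_solution_def
  proof (intro conjI allI impI ballI continuous_on_neumann_solution)
    fix x :: real
    assume "x \<notin> {0..1}"
    then show "neumann_solution x = 0" by (auto simp: neumann_solution_def)
  next
    fix x :: real
    assume x: "x \<in> {0..1}"
    then have "neumann_solution x = (h x - LK_neumann_series x) / lam" by (simp add: neumann_solution_def)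
    then show "LK K p neumann_solution x + lam * neumann_solution x = h x"
      using LK_solution[OF x] lam_pos by simp
  qed
  then show ?thesis by (rule exI[of _ neumann_solution])
qed

end

end

lemma resolvent_solves:
  assumes lam: "0 < lam" and h: "continuous_on {0..1} h"
  shows "resolvent_solution lam h (resolvent K p lam h)"
proof -
  obtain \<kappa> where \<kappa>: "\<And>x t. x \<in> {0..1} \<Longrightarrow> t \<in> {0..1} \<Longrightarrow> \<bar>K x t\<bar> \<le> \<kappa>"
    using kernel_bounded by blast
  have "\<exists>!g. resolvent_solution lam h g"
    using resolvent_solution_exists[OF \<kappa> lam h] resolvent_solution_unique[OF \<kappa> lam]
    by (rule ex_ex1I)
  moreover have "resolvent K p lam h = (THE g. resolvent_solution lam h g)"
    unfolding resolvent_def resolvent_solution_def by simp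
  ultimately show ?thesis using theI'[of "resolvent_solution lam h"] by simp
qed

end

section \<open>Differentiability\<close>

locale smooth_psd_kernel_operator = psd_kernel_operator +
  fixes K1 :: "real \<Rightarrow> real \<Rightarrow> real"
  assumes kernel_derivative_continuous: "continuous_on ({0..1} \<times> {0..1}) (\<lambda>(x, t). K1 x t)"
    and kernel_has_derivative:
      "\<And>x t. x \<in> {0<..<1} \<Longrightarrow> t \<in> {0..1} \<Longrightarrow> ((\<lambda>s. K s t) has_real_derivative K1 x t) (at x)"
begin

lemma kernel_linearization:
  assumes e: "0 < e"
  obtains d where "0 < d"
    and "\<And>x y t. x \<in> {0<..<1} \<Longrightarrow> y \<in> {0<..<1} \<Longrightarrow> t \<in> {0..1} \<Longrightarrow> \<bar>y - x\<bar> < d \<Longrightarrow>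
           \<bar>K y t - K x t - (y - x) * K1 x t\<bar> \<le> e * \<bar>y - x\<bar>"
proof -
  obtain d where d: "0 < d" and close: "\<And>x y t s. x \<in> {0..1} \<Longrightarrow> y \<in> {0..1} \<Longrightarrow> t \<in> {0..1} \<Longrightarrow>
      s \<in> {0..1} \<Longrightarrow> \<bar>y - x\<bar> < d \<Longrightarrow> \<bar>s - t\<bar> < d \<Longrightarrow> \<bar>K1 y s - K1 x t\<bar> < e"
    using uniformly_continuous_on_unit_square[OF kernel_derivative_continuous e] by blast
  show ?thesis
  proof (rule that[OF d])
    fix x y t :: real
    assume x: "x \<in> {0<..<1}" and y: "y \<in> {0<..<1}" and t: "t \<in> {0..1}" and near: "\<bar>y - x\<bar> < d"
    have segment: "closed_segment x y \<subseteq> {0<..<1}"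
      using x y by (intro closed_segment_subset) auto
    have "norm (K y t - K x t - (y - x) *\<^sub>R K1 x t) \<le> norm (y - x) * e"
    proof (rule vector_differentiable_bound_linearization[where S = "closed_segment x y"
          and f = "\<lambda>s. K s t" and f' = "\<lambda>s. K1 s t"])
      show "((\<lambda>s. K s t) has_vector_derivative K1 s t) (at s within closed_segment x y)"
        if "s \<in> closed_segment x y" for s
      proof -
        have "s \<in> {0<..<1}" using segment that by blast
        then have "((\<lambda>s. K s t) has_vector_derivative K1 s t) (at s)"
          using kernel_has_derivative t by (simp add: has_real_derivative_iff_has_vector_derivative)
        then show ?thesis by (rule has_vector_derivative_at_within)
      qed
      show "norm (K1 s t - K1 x t) \<le> e" if "s \<in> closed_segment x y" for s
      proof -
        have "\<bar>s - x\<bar> < d" using that near by (auto simp: closed_segment_eq_real_ivl split: if_splits)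
        moreover have "s \<in> {0<..<1}" using that segment by blast
        ultimately have "\<bar>K1 s t - K1 x t\<bar> < e" using close[of x s t t] x t d by simp
        then show ?thesis by simp
      qed
    qed auto
    then show "\<bar>K y t - K x t - (y - x) * K1 x t\<bar> \<le> e * \<bar>y - x\<bar>" by (simp add: mult.commute)
  qed
qed

lemma LK_linearization:
  assumes u: "continuous_on {0..1} u" and e: "0 < e"
  obtains d where "0 < d"
    and "\<And>x y. x \<in> {0<..<1} \<Longrightarrow> y \<in> {0<..<1} \<Longrightarrow> \<bar>y - x\<bar> < d \<Longrightarrow>
      \<bar>LK K p u y - LK K p u x - (y - x) * Ep (\<lambda>t. K1 x t * u t)\<bar> \<le> e * \<bar>y - x\<bar> * Ep (\<lambda>t. \<bar>u t\<bar>)"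
proof -
  obtain d where d: "0 < d" and linear: "\<And>x y t. x \<in> {0<..<1} \<Longrightarrow> y \<in> {0<..<1} \<Longrightarrow> t \<in> {0..1} \<Longrightarrow>
      \<bar>y - x\<bar> < d \<Longrightarrow> \<bar>K y t - K x t - (y - x) * K1 x t\<bar> \<le> e * \<bar>y - x\<bar>"
    using kernel_linearization[OF e] by blast
  have "\<bar>LK K p u y - LK K p u x - (y - x) * Ep (\<lambda>t. K1 x t * u t)\<bar> \<le> e * \<bar>y - x\<bar> * Ep (\<lambda>t. \<bar>u t\<bar>)"
    if x: "x \<in> {0<..<1}" and y: "y \<in> {0<..<1}" and near: "\<bar>y - x\<bar> < d" for x y
  proof -
    have K1x: "continuous_on {0..1} (K1 x)"
      using x by (intro continuous_on_unit_square_slice[OF kernel_derivative_continuous]) auto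
    have cont: "continuous_on {0..1} (\<lambda>t. (K y t - K x t - (y - x) * K1 x t) * u t)"
      using u x y K1x by (intro continuous_intros continuous_on_kernel_slice) auto
    have Ky: "continuous_on {0..1} (\<lambda>t. K y t * u t)" and Kx: "continuous_on {0..1} (\<lambda>t. K x t * u t)"
      using u x y by (auto intro!: continuous_intros continuous_on_kernel_slice)
    have K1u: "continuous_on {0..1} (\<lambda>t. (y - x) * (K1 x t * u t))"
      using u K1x by (intro continuous_intros)
    have "Ep (\<lambda>t. (K y t - K x t - (y - x) * K1 x t) * u t) =
        Ep (\<lambda>t. (K y t * u t - K x t * u t) - (y - x) * (K1 x t * u t))"
      by (rule Ep_cong) (simp add: algebra_simps)
    also have "\<dots> = LK K p u y - LK K p u x - (y - x) * Ep (\<lambda>t. K1 x t * u t)"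
      unfolding Ep_diff[OF continuous_on_diff[OF Ky Kx] K1u] Ep_diff[OF Ky Kx] Ep_cmult LK_eq_Ep ..
    finally have "\<bar>LK K p u y - LK K p u x - (y - x) * Ep (\<lambda>t. K1 x t * u t)\<bar> =
        \<bar>Ep (\<lambda>t. (K y t - K x t - (y - x) * K1 x t) * u t)\<bar>" by simp
    also have "\<dots> \<le> Ep (\<lambda>t. \<bar>(K y t - K x t - (y - x) * K1 x t) * u t\<bar>)"
      by (rule abs_Ep_le_Ep_abs[OF cont])
    also have "\<dots> \<le> Ep (\<lambda>t. e * \<bar>y - x\<bar> * \<bar>u t\<bar>)"
    proof (rule Ep_mono)
      show "continuous_on {0..1} (\<lambda>t. \<bar>(K y t - K x t - (y - x) * K1 x t) * u t\<bar>)"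
        using cont by (rule continuous_on_rabs)
      show "continuous_on {0..1} (\<lambda>t. e * \<bar>y - x\<bar> * \<bar>u t\<bar>)" using u by (intro continuous_intros)
      fix t :: real assume t: "t \<in> {0..1}"
      then show "\<bar>(K y t - K x t - (y - x) * K1 x t) * u t\<bar> \<le> e * \<bar>y - x\<bar> * \<bar>u t\<bar>"
        using linear[OF x y t near] by (simp add: abs_mult mult_right_mono)
    qed
    also have "\<dots> = e * \<bar>y - x\<bar> * Ep (\<lambda>t. \<bar>u t\<bar>)" by (rule Ep_cmult)
    finally show ?thesis .
  qed
  with d that show ?thesis by blast
qed

lemma LK_has_derivative:
  assumes u: "continuous_on {0..1} u" and x: "x \<in> {0<..<1}"
  shows "(LK K p u has_real_derivative Ep (\<lambda>t. K1 x t * u t)) (at x)"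
  unfolding has_field_derivative_iff
proof (rule LIM_I)
  fix r :: real assume r: "0 < r"
  define B where "B = Ep (\<lambda>t. \<bar>u t\<bar>)"
  have B: "0 \<le> B" unfolding B_def using u by (intro Ep_nonneg continuous_intros) auto
  define e where "e = r / (2 * (B + 1))"
  have e: "0 < e" "e * B < r" unfolding e_def using r B by (simp_all add: field_simps add_nonneg_pos)
  obtain d where d: "0 < d" and linear: "\<And>x y. x \<in> {0<..<1} \<Longrightarrow> y \<in> {0<..<1} \<Longrightarrow> \<bar>y - x\<bar> < d \<Longrightarrow>
      \<bar>LK K p u y - LK K p u x - (y - x) * Ep (\<lambda>t. K1 x t * u t)\<bar> \<le> e * \<bar>y - x\<bar> * B"
    unfolding B_def using LK_linearization[OF u e(1)] by blast
  have "norm ((LK K p u y - LK K p u x) / (y - x) - Ep (\<lambda>t. K1 x t * u t)) < r"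
    if y: "y \<noteq> x" "norm (y - x) < min d (min x (1 - x))" for y
  proof -
    have "y \<in> {0<..<1}" using x y by auto
    have "(LK K p u y - LK K p u x) / (y - x) - Ep (\<lambda>t. K1 x t * u t) =
        (LK K p u y - LK K p u x - (y - x) * Ep (\<lambda>t. K1 x t * u t)) / (y - x)"
      using y by (simp add: field_simps)
    then have "\<bar>(LK K p u y - LK K p u x) / (y - x) - Ep (\<lambda>t. K1 x t * u t)\<bar> =
        \<bar>LK K p u y - LK K p u x - (y - x) * Ep (\<lambda>t. K1 x t * u t)\<bar> / \<bar>y - x\<bar>"
      by (simp add: abs_divide)
    also have "\<dots> \<le> e * \<bar>y - x\<bar> * B / \<bar>y - x\<bar>"
      using linear[OF x \<open>y \<in> {0<..<1}\<close>] y by (intro divide_right_mono) auto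
    also have "\<dots> = e * B" using y by simp
    finally show ?thesis using e(2) by simp
  qed
  then show "\<exists>s>0. \<forall>y. y \<noteq> x \<and> norm (y - x) < s \<longrightarrow>
      norm ((LK K p u y - LK K p u x) / (y - x) - Ep (\<lambda>t. K1 x t * u t)) < r"
    using d x by (intro exI[of _ "min d (min x (1 - x))"]) auto
qed

lemma f_lambda_has_derivative:
  assumes lam: "0 < lam" and f0: "continuous_on {0..1} f0" and x: "x \<in> {0<..<1}"
  shows "(f_lambda K p lam f0 has_real_derivative deriv (f_lambda K p lam f0) x) (at x)"
proof -
  define g where "g = f_lambda K p lam f0"
  have "resolvent_solution lam (LK K p f0) g"
    unfolding g_def f_lambda_def using resolvent_solves[OF lam continuous_on_LK[OF f0]] .
  then have g: "continuous_on {0..1} g"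
    and g_eq: "\<And>y. y \<in> {0<..<1} \<Longrightarrow> (LK K p f0 y - LK K p g y) / lam = g y"
    unfolding resolvent_solution_def using lam by (auto simp: field_simps)
  have "((\<lambda>y. (LK K p f0 y - LK K p g y) / lam) has_real_derivative
      (Ep (\<lambda>t. K1 x t * f0 t) - Ep (\<lambda>t. K1 x t * g t)) / lam) (at x)"
    by (intro DERIV_cdivide DERIV_diff LK_has_derivative f0 g x)
  then have "(g has_real_derivative (Ep (\<lambda>t. K1 x t * f0 t) - Ep (\<lambda>t. K1 x t * g t)) / lam) (at x)"
    by (rule has_field_derivative_transform_within_open[of _ _ _ "{0<..<1}"]) (use x g_eq in auto)
  then show ?thesis unfolding g_def using DERIV_imp_deriv by metis
qed

end

lemma has_real_derivative_at_interior:
  assumes "(f has_real_derivative D) (at x within {0..1})" and "x \<in> {0<..<1}"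
  shows "(f has_real_derivative D) (at x)"
  using assms at_within_interior[of x "{0..1::real}"] by simp

lemma kernel_Ck_continuous:
  "kernel_Ck r K Kd \<Longrightarrow> j + l \<le> r \<Longrightarrow> continuous_on ({0..1} \<times> {0..1}) (\<lambda>(x, t). Kd j l x t)"
  unfolding kernel_Ck_def by blast

lemma kernel_Ck_has_derivative:
  assumes K: "kernel_Ck r K Kd" and jl: "j + l < r" and x: "x \<in> {0<..<1}" and t: "t \<in> {0..1}"
  shows "((\<lambda>s. Kd j l s t) has_real_derivative Kd (Suc j) l x t) (at x)"
proof -
  have "\<forall>j l. j + l < r \<longrightarrow> (\<forall>x\<in>{0..1}. \<forall>x'\<in>{0..1}.
      ((\<lambda>s. Kd j l s x') has_real_derivative Kd (Suc j) l x x') (at x within {0..1}) \<and>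
      ((\<lambda>s. Kd j l x s) has_real_derivative Kd j (Suc l) x x') (at x' within {0..1}))"
    using K unfolding kernel_Ck_def by blast
  then have "((\<lambda>s. Kd j l s t) has_real_derivative Kd (Suc j) l x t) (at x within {0..1})"
    using jl x t by simp
  then show ?thesis using x by (rule has_real_derivative_at_interior)
qed

lemma kernel_Ck_has_derivative_kernel:
  assumes K: "kernel_Ck r K Kd" and r: "0 < r" and x: "x \<in> {0<..<1}" and t: "t \<in> {0..1}"
  shows "((\<lambda>s. K s t) has_real_derivative Kd 1 0 x t) (at x)"
proof -
  have "((\<lambda>s. Kd 0 0 s t) has_real_derivative Kd 1 0 x t) (at x)"
    using kernel_Ck_has_derivative[OF K _ x t, of 0 0] r by simp
  then show ?thesis
  proof (rule has_field_derivative_transform_within_open[of _ _ _ "{0<..<1}"])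
    have "\<forall>x\<in>{0..1}. \<forall>x'\<in>{0..1}. Kd 0 0 x x' = K x x'" using K unfolding kernel_Ck_def by blast
    then show "Kd 0 0 s t = K s t" if "s \<in> {0<..<1}" for s using that t by simp
  qed (use x in auto)
qed

lemma mu_hat_has_derivative:
  assumes K: "kernel_Ck r K Kd" and r: "0 < r" and X: "\<forall>i<n. X i \<in> {0..1}" and x: "x \<in> {0<..<1}"
  shows "(mu_hat K n lam X y has_real_derivative mu_hat_deriv K Kd n lam X y 0 x) (at x)"
  unfolding mu_hat_def[abs_def] mu_hat_deriv_def
  using X kernel_Ck_has_derivative_kernel[OF K r x] by (intro DERIV_sum DERIV_cmult_right) simp

lemma mu_hat_deriv_has_derivative:
  assumes K: "kernel_Ck r K Kd" and k: "Suc k < r" and X: "\<forall>i<n. X i \<in> {0..1}" and x: "x \<in> {0<..<1}"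
  shows "(mu_hat_deriv K Kd n lam X y k has_real_derivative mu_hat_deriv K Kd n lam X y (Suc k) x) (at x)"
  unfolding mu_hat_deriv_def[abs_def]
  using X k x by (intro DERIV_sum DERIV_cmult_right kernel_Ck_has_derivative[OF K]) auto

lemma smooth_psd_kernel_operator_kernel_Ck:
  assumes "\<forall>x\<in>{0..1}. 0 \<le> p x" "p integrable_on {0..1}" "integral {0..1} p = 1"
    and "pd_kernel K" and K: "kernel_Ck r K Kd" and r: "0 < r"
  shows "smooth_psd_kernel_operator p K (Kd 1 0)"
proof unfold_locales
  show "\<forall>x\<in>{0..1}. 0 \<le> p x" "p integrable_on {0..1}" "integral {0..1} p = 1" "pd_kernel K"
    by (fact assms)+
  have "\<forall>x\<in>{0..1}. \<forall>x'\<in>{0..1}. Kd 0 0 x x' = K x x'" using K unfolding kernel_Ck_def by blast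
  then show "continuous_on ({0..1} \<times> {0..1}) (\<lambda>(x, t). K x t)"
    using kernel_Ck_continuous[OF K, of 0 0] by (auto elim!: continuous_on_eq)
  show "continuous_on ({0..1} \<times> {0..1}) (\<lambda>(x, t). Kd 1 0 x t)"
    using kernel_Ck_continuous[OF K, of 1 0] r by simp
  show "((\<lambda>s. K s t) has_real_derivative Kd 1 0 x t) (at x)" if "x \<in> {0<..<1}" "t \<in> {0..1}" for x t
    using kernel_Ck_has_derivative_kernel[OF K r that] .
qed

section \<open>Extrema of perturbed functions\<close>

definition sign_definite_on :: "real set \<Rightarrow> (real \<Rightarrow> real) \<Rightarrow> real \<Rightarrow> bool" where
  "sign_definite_on S g a \<longleftrightarrow> (\<forall>s\<in>S. a \<le> g s) \<or> (\<forall>s\<in>S. g s \<le> - a)"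

definition nondegenerate_zero :: "(real \<Rightarrow> real) \<Rightarrow> (real \<Rightarrow> real) \<Rightarrow> real \<Rightarrow> real \<Rightarrow> real \<Rightarrow> bool" where
  "nondegenerate_zero g g' a \<eta> c \<longleftrightarrow> {c - \<eta>..c + \<eta>} \<subseteq> {0<..<1} \<and> g c = 0 \<and>
     (\<forall>s\<in>{c - \<eta>..c + \<eta>}. (g has_real_derivative g' s) (at s)) \<and> sign_definite_on {c - \<eta>..c + \<eta>} g' a"

lemma sign_definite_on_perturb:
  assumes "sign_definite_on S g a" and "T \<subseteq> S" and "\<And>s. s \<in> T \<Longrightarrow> \<bar>h s - g s\<bar> \<le> b"
  shows "sign_definite_on T h (a - b)"
  using assms unfolding sign_definite_on_def by (force simp: abs_le_iff)

lemma sign_definite_near: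
  assumes g: "continuous_on {0..1} g" and c: "c \<in> {0<..<1}" and a: "a < \<bar>g c\<bar>"
  shows "\<forall>\<^sub>F \<eta> in at_right 0. {c - \<eta>..c + \<eta>} \<subseteq> {0<..<1} \<and> sign_definite_on {c - \<eta>..c + \<eta>} g a"
proof -
  obtain d where d: "0 < d" and close: "\<And>s. s \<in> {0..1} \<Longrightarrow> dist s c < d \<Longrightarrow> dist (g s) (g c) < \<bar>g c\<bar> - a"
    using g c a unfolding continuous_on_iff by (metis diff_gt_0_iff_gt greaterThanLessThan_subseteq_atLeastAtMost_iff
        order_refl subsetD)
  show ?thesis
    unfolding eventually_at_right_field
  proof (intro exI[of _ "min d (min c (1 - c))"] conjI allI impI)
    show "0 < min d (min c (1 - c))" using d c by auto
    fix \<eta> :: real assume \<eta>: "0 < \<eta>" "\<eta> < min d (min c (1 - c))"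
    show "{c - \<eta>..c + \<eta>} \<subseteq> {0<..<1}" using \<eta> by auto
    have near: "\<bar>g s - g c\<bar> < \<bar>g c\<bar> - a" if "s \<in> {c - \<eta>..c + \<eta>}" for s
      using close[of s] that \<eta> c by (auto simp: dist_real_def)
    show "sign_definite_on {c - \<eta>..c + \<eta>} g a"
      unfolding sign_definite_on_def
    proof (cases "0 \<le> g c")
      case True
      then have "a \<le> g s" if "s \<in> {c - \<eta>..c + \<eta>}" for s using near[OF that] by (auto simp: abs_less_iff)
      then show "(\<forall>s\<in>{c - \<eta>..c + \<eta>}. a \<le> g s) \<or> (\<forall>s\<in>{c - \<eta>..c + \<eta>}. g s \<le> - a)" by blast
    next
      case False
      then have "g s \<le> - a" if "s \<in> {c - \<eta>..c + \<eta>}" for s using near[OF that] by (auto simp: abs_less_iff)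
      then show "(\<forall>s\<in>{c - \<eta>..c + \<eta>}. a \<le> g s) \<or> (\<forall>s\<in>{c - \<eta>..c + \<eta>}. g s \<le> - a)" by blast
    qed
  qed
qed

lemma eventually_at_right_0_obtain:
  assumes "\<forall>\<^sub>F x in at_right (0::real). P x"
  obtains x where "0 < x" and "P x"
proof -
  obtain b :: real where "0 < b" and "\<And>y. 0 < y \<Longrightarrow> y < b \<Longrightarrow> P y"
    using assms unfolding eventually_at_right_field by blast
  then show ?thesis using that[of "b / 2"] by simp
qed

lemma is_local_extremum_deriv_zero:
  assumes "is_local_extremum F \<tau>" and F: "(F has_real_derivative D) (at \<tau>)"
  shows "D = 0"
proof -
  obtain e where e: "0 < e"
    and "(\<forall>s. \<bar>s - \<tau>\<bar> < e \<longrightarrow> F s \<le> F \<tau>) \<or> (\<forall>s. \<bar>s - \<tau>\<bar> < e \<longrightarrow> F \<tau> \<le> F s)"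
    using assms(1) unfolding is_local_extremum_def by blast
  then show ?thesis
    using DERIV_local_max[OF F e] DERIV_local_min[OF F e] by (auto simp: abs_minus_commute)
qed

lemma increment_ge_of_derivative_ge:
  fixes g g' :: "real \<Rightarrow> real"
  assumes st: "s \<le> t" and g: "\<And>x. x \<in> {s..t} \<Longrightarrow> (g has_real_derivative g' x) (at x)"
    and bound: "\<And>x. x \<in> {s..t} \<Longrightarrow> a \<le> g' x"
  shows "a * (t - s) \<le> g t - g s"
proof -
  have "g s - a * s \<le> g t - a * t"
  proof (rule DERIV_nonneg_imp_nondecreasing[OF st])
    fix x assume "s \<le> x" "x \<le> t"
    then have "((\<lambda>x. g x - a * x) has_real_derivative g' x - a) (at x)" and "a \<le> g' x"
      using g[of x] bound[of x] by (auto intro!: derivative_eq_intros)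
    then show "\<exists>y. ((\<lambda>x. g x - a * x) has_real_derivative y) (at x) \<and> 0 \<le> y" by auto
  qed
  then show ?thesis by (simp add: algebra_simps)
qed

lemma local_min_of_derivative_sign_change:
  fixes F F' :: "real \<Rightarrow> real"
  assumes F: "\<And>s. s \<in> {c - \<eta>..c + \<eta>} \<Longrightarrow> (F has_real_derivative F' s) (at s)"
    and \<delta>: "0 \<le> \<delta>" "\<delta> < \<eta>"
    and left: "\<And>s. s \<in> {c - \<eta>..c - \<delta>} \<Longrightarrow> F' s \<le> 0"
    and right: "\<And>s. s \<in> {c + \<delta>..c + \<eta>} \<Longrightarrow> 0 \<le> F' s"
  obtains \<tau> where "\<bar>\<tau> - c\<bar> \<le> \<delta>" and "\<And>s. \<bar>s - \<tau>\<bar> < \<eta> - \<delta> \<Longrightarrow> F \<tau> \<le> F s"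
proof -
  have "continuous_on {c - \<delta>..c + \<delta>} F"
    using \<delta> by (intro continuous_at_imp_continuous_on ballI DERIV_isCont[OF F]) auto
  moreover have "{c - \<delta>..c + \<delta>} \<noteq> {}" using \<delta> by simp
  ultimately obtain \<tau> where \<tau>: "\<tau> \<in> {c - \<delta>..c + \<delta>}" and min: "\<And>s. s \<in> {c - \<delta>..c + \<delta>} \<Longrightarrow> F \<tau> \<le> F s"
    using continuous_attains_inf[OF compact_Icc] by blast
  show ?thesis
  proof (rule that)
    show "\<bar>\<tau> - c\<bar> \<le> \<delta>" using \<tau> by auto
    fix s assume s: "\<bar>s - \<tau>\<bar> < \<eta> - \<delta>"
    consider "s < c - \<delta>" | "s \<in> {c - \<delta>..c + \<delta>}" | "c + \<delta> < s" by fastforce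
    then show "F \<tau> \<le> F s"
    proof cases
      case 1
      have "F (c - \<delta>) \<le> F s"
      proof (rule DERIV_nonpos_imp_nonincreasing[of s "c - \<delta>" F])
        show "s \<le> c - \<delta>" using 1 by simp
        fix x assume "s \<le> x" "x \<le> c - \<delta>"
        then show "\<exists>y. (F has_real_derivative y) (at x) \<and> y \<le> 0"
          using F[of x] left[of x] s \<tau> \<delta> by (intro exI[of _ "F' x"]) auto
      qed
      then show ?thesis using min[of "c - \<delta>"] \<delta> by auto
    next
      case 2
      then show ?thesis by (rule min)
    next
      case 3
      have "F (c + \<delta>) \<le> F s"
      proof (rule DERIV_nonneg_imp_nondecreasing[of "c + \<delta>" s F])
        show "c + \<delta> \<le> s" using 3 by simp
        fix x assume "c + \<delta> \<le> x" "x \<le> s"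
        then show "\<exists>y. (F has_real_derivative y) (at x) \<and> 0 \<le> y"
          using F[of x] right[of x] s \<tau> \<delta> by (intro exI[of _ "F' x"]) auto
      qed
      then show ?thesis using min[of "c + \<delta>"] \<delta> by auto
    qed
  qed
qed

lemma local_min_near_approximate_zero:
  fixes F F' g g' :: "real \<Rightarrow> real"
  assumes g: "\<And>s. s \<in> {c - \<eta>..c + \<eta>} \<Longrightarrow> (g has_real_derivative g' s) (at s)"
    and slope: "\<And>s. s \<in> {c - \<eta>..c + \<eta>} \<Longrightarrow> a \<le> g' s" and a: "0 < a"
    and F: "\<And>s. s \<in> {c - \<eta>..c + \<eta>} \<Longrightarrow> (F has_real_derivative F' s) (at s)"
    and approx: "\<And>s. s \<in> {c - \<eta>..c + \<eta>} \<Longrightarrow> \<bar>F' s - g s\<bar> \<le> e" and e: "0 \<le> e"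
    and small: "\<bar>g c\<bar> + e < a * \<eta>"
  obtains \<tau> where "\<bar>\<tau> - c\<bar> \<le> (\<bar>g c\<bar> + e) / a"
    and "\<And>s. \<bar>s - \<tau>\<bar> < \<eta> - (\<bar>g c\<bar> + e) / a \<Longrightarrow> F \<tau> \<le> F s"
proof -
  define \<delta> where "\<delta> = (\<bar>g c\<bar> + e) / a"
  have \<delta>: "0 \<le> \<delta>" "\<delta> < \<eta>" and a\<delta>: "a * \<delta> = \<bar>g c\<bar> + e"
    using a e small by (auto simp: \<delta>_def pos_divide_less_eq mult.commute)
  have "F' s \<le> 0" if s: "s \<in> {c - \<eta>..c - \<delta>}" for s
  proof -
    have "a * (c - s) \<le> g c - g s"
      by (rule increment_ge_of_derivative_ge[where g' = g']) (use s \<delta> g slope in auto)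
    moreover have "a * \<delta> \<le> a * (c - s)" using s a by (intro mult_left_mono) auto
    ultimately show ?thesis using approx[of s] s \<delta> a\<delta> by (auto simp: abs_le_iff)
  qed
  moreover have "0 \<le> F' s" if s: "s \<in> {c + \<delta>..c + \<eta>}" for s
  proof -
    have "a * (s - c) \<le> g s - g c"
      by (rule increment_ge_of_derivative_ge[where g' = g']) (use s \<delta> g slope in auto)
    moreover have "a * \<delta> \<le> a * (s - c)" using s a by (intro mult_left_mono) auto
    ultimately show ?thesis using approx[of s] s \<delta> a\<delta> by (auto simp: abs_le_iff)
  qed
  ultimately obtain \<tau> where "\<bar>\<tau> - c\<bar> \<le> \<delta>" and "\<And>s. \<bar>s - \<tau>\<bar> < \<eta> - \<delta> \<Longrightarrow> F \<tau> \<le> F s"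
    using local_min_of_derivative_sign_change[OF F \<delta>] by blast
  then show ?thesis using that unfolding \<delta>_def by blast
qed

lemma extremum_near_approximate_zero:
  fixes F F' g g' :: "real \<Rightarrow> real"
  assumes I: "{c - \<eta>..c + \<eta>} \<subseteq> {0<..<1}"
    and g: "\<And>s. s \<in> {c - \<eta>..c + \<eta>} \<Longrightarrow> (g has_real_derivative g' s) (at s)"
    and sign: "sign_definite_on {c - \<eta>..c + \<eta>} g' a" and a: "0 < a"
    and F: "\<And>s. s \<in> {c - \<eta>..c + \<eta>} \<Longrightarrow> (F has_real_derivative F' s) (at s)"
    and approx: "\<And>s. s \<in> {c - \<eta>..c + \<eta>} \<Longrightarrow> \<bar>F' s - g s\<bar> \<le> e" and e: "0 \<le> e"
    and small: "\<bar>g c\<bar> + e < a * \<eta>"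
  obtains \<tau> where "\<bar>\<tau> - c\<bar> \<le> (\<bar>g c\<bar> + e) / a" and "is_local_extremum F \<tau>" and "F' \<tau> = 0"
proof -
  define \<delta> where "\<delta> = (\<bar>g c\<bar> + e) / a"
  have \<delta>: "\<delta> < \<eta>" using a small by (simp add: \<delta>_def pos_divide_less_eq mult.commute)
  from sign consider "\<And>s. s \<in> {c - \<eta>..c + \<eta>} \<Longrightarrow> a \<le> g' s" | "\<And>s. s \<in> {c - \<eta>..c + \<eta>} \<Longrightarrow> g' s \<le> - a"
    unfolding sign_definite_on_def by blast
  then obtain \<tau> where \<tau>: "\<bar>\<tau> - c\<bar> \<le> \<delta>"
    and extremal: "(\<forall>s. \<bar>s - \<tau>\<bar> < \<eta> - \<delta> \<longrightarrow> F \<tau> \<le> F s) \<or> (\<forall>s. \<bar>s - \<tau>\<bar> < \<eta> - \<delta> \<longrightarrow> F s \<le> F \<tau>)"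
  proof cases
    case 1
    then show ?thesis
      using local_min_near_approximate_zero[OF g _ a F approx e small] that unfolding \<delta>_def by blast
  next
    case 2
    have "\<exists>\<tau>. \<bar>\<tau> - c\<bar> \<le> \<delta> \<and> (\<forall>s. \<bar>s - \<tau>\<bar> < \<eta> - \<delta> \<longrightarrow> - F \<tau> \<le> - F s)"
    proof (rule local_min_near_approximate_zero[of c \<eta> "\<lambda>s. - g s" "\<lambda>s. - g' s" a "\<lambda>s. - F s" "\<lambda>s. - F' s" e])
      show "\<bar>- F' s - - g s\<bar> \<le> e" if "s \<in> {c - \<eta>..c + \<eta>}" for s using approx[OF that] by simp
      show "a \<le> - g' s" if "s \<in> {c - \<eta>..c + \<eta>}" for s using 2[OF that] by simp
    qed (use g F a e small \<delta>_def in \<open>auto intro: DERIV_minus\<close>)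
    then show ?thesis using that by auto
  qed
  have \<tau>_I: "\<tau> \<in> {c - \<eta>..c + \<eta>}" using \<tau> \<delta> unfolding abs_diff_le_iff by auto
  then have "\<tau> \<in> {0<..<1}" using I by blast
  then have "is_local_extremum F \<tau>"
    using extremal \<delta> unfolding is_local_extremum_def by (intro conjI exI[of _ "\<eta> - \<delta>"]) auto
  moreover have "F' \<tau> = 0"
    using is_local_extremum_deriv_zero[OF calculation F[OF \<tau>_I]] .
  ultimately show ?thesis using that \<tau> unfolding \<delta>_def by blast
qed

lemma extremum_near_nondegenerate_zero:
  fixes g g' F F' :: "real \<Rightarrow> real"
  assumes nz: "nondegenerate_zero g g' a \<eta> c" and a: "0 < a"
    and F: "\<And>s. s \<in> {0<..<1} \<Longrightarrow> (F has_real_derivative F' s) (at s)"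
    and approx: "\<And>s. s \<in> {0<..<1} \<Longrightarrow> \<bar>F' s - g s\<bar> \<le> e" and e: "0 \<le> e" and small: "e < a * \<eta>"
  obtains \<tau> where "\<bar>\<tau> - c\<bar> \<le> e / a" and "is_local_extremum F \<tau>" and "F' \<tau> = 0"
proof -
  have I: "{c - \<eta>..c + \<eta>} \<subseteq> {0<..<1}" and g_c: "g c = 0"
    and g: "\<And>s. s \<in> {c - \<eta>..c + \<eta>} \<Longrightarrow> (g has_real_derivative g' s) (at s)"
    and sign: "sign_definite_on {c - \<eta>..c + \<eta>} g' a"
    using nz unfolding nondegenerate_zero_def by auto
  have F_I: "\<And>s. s \<in> {c - \<eta>..c + \<eta>} \<Longrightarrow> (F has_real_derivative F' s) (at s)"
    and approx_I: "\<And>s. s \<in> {c - \<eta>..c + \<eta>} \<Longrightarrow> \<bar>F' s - g s\<bar> \<le> e"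
    using F approx I by blast+
  have "\<bar>g c\<bar> + e < a * \<eta>" using small g_c by simp
  with extremum_near_approximate_zero[OF I g sign a F_I approx_I e] show ?thesis
    using that g_c by auto
qed

lemma extremum_near_perturbed_critical_point:
  fixes g g' G G' G'' :: "real \<Rightarrow> real"
  assumes nz: "nondegenerate_zero g g' a \<eta> c" and a: "0 < a" and \<tau>: "\<bar>\<tau> - c\<bar> \<le> \<eta> / 2"
    and G: "\<And>s. s \<in> {0<..<1} \<Longrightarrow> (G has_real_derivative G' s) (at s)"
    and G': "\<And>s. s \<in> {0<..<1} \<Longrightarrow> (G' has_real_derivative G'' s) (at s)"
    and curvature: "\<And>s. s \<in> {0<..<1} \<Longrightarrow> \<bar>G'' s - g' s\<bar> \<le> a / 2"
    and small: "\<bar>G' \<tau>\<bar> < a * \<eta> / 4"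
  obtains \<theta> where "\<bar>\<theta> - \<tau>\<bar> \<le> 2 * \<bar>G' \<tau>\<bar> / a" and "is_local_extremum G \<theta>"
proof -
  have I: "{c - \<eta>..c + \<eta>} \<subseteq> {0<..<1}" and sign: "sign_definite_on {c - \<eta>..c + \<eta>} g' a"
    using nz unfolding nondegenerate_zero_def by auto
  have J: "{\<tau> - \<eta> / 2..\<tau> + \<eta> / 2} \<subseteq> {c - \<eta>..c + \<eta>}" using \<tau> unfolding abs_diff_le_iff by auto
  then have "sign_definite_on {\<tau> - \<eta> / 2..\<tau> + \<eta> / 2} G'' (a - a / 2)"
    using sign_definite_on_perturb[OF sign] curvature I by blast
  then have sign': "sign_definite_on {\<tau> - \<eta> / 2..\<tau> + \<eta> / 2} G'' (a / 2)" by simp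
  have J01: "{\<tau> - \<eta> / 2..\<tau> + \<eta> / 2} \<subseteq> {0<..<1}" using J I by blast
  have G_J: "\<And>s. s \<in> {\<tau> - \<eta> / 2..\<tau> + \<eta> / 2} \<Longrightarrow> (G has_real_derivative G' s) (at s)"
    and G'_J: "\<And>s. s \<in> {\<tau> - \<eta> / 2..\<tau> + \<eta> / 2} \<Longrightarrow> (G' has_real_derivative G'' s) (at s)"
    using G G' J01 by blast+
  have "\<bar>G' \<tau>\<bar> + 0 < a / 2 * (\<eta> / 2)" using small by simp
  with extremum_near_approximate_zero[OF J01 G'_J sign' _ G_J, of 0] a
  obtain \<theta> where "\<bar>\<theta> - \<tau>\<bar> \<le> (\<bar>G' \<tau>\<bar> + 0) / (a / 2)" and "is_local_extremum G \<theta>"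
    by auto
  then show ?thesis using that by (simp add: field_simps)
qed

lemma extrema_near_nondegenerate_zeros:
  fixes F F' f' f'' :: "real \<Rightarrow> real" and t :: "'i \<Rightarrow> real"
  assumes crit: "\<And>m. m \<in> S \<Longrightarrow> nondegenerate_zero f' f'' a \<eta> (t m)" and a: "0 < a" and \<eta>: "0 < \<eta>"
    and F: "\<And>s. s \<in> {0<..<1} \<Longrightarrow> (F has_real_derivative F' s) (at s)"
    and close: "\<And>s. s \<in> {0<..<1} \<Longrightarrow> \<bar>F' s - f' s\<bar> \<le> e" and e: "0 \<le> e" "e \<le> a * \<eta> / 2"
  shows "\<exists>tl. \<forall>m\<in>S. is_local_extremum F (tl m) \<and> F' (tl m) = 0 \<and> \<bar>tl m - t m\<bar> \<le> e / a"
proof -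
  have small: "e < a * \<eta>" using e mult_pos_pos[OF a \<eta>] by linarith
  have "\<exists>\<tau>. is_local_extremum F \<tau> \<and> F' \<tau> = 0 \<and> \<bar>\<tau> - t m\<bar> \<le> e / a" if m: "m \<in> S" for m
  proof -
    obtain \<tau> where "\<bar>\<tau> - t m\<bar> \<le> e / a" "is_local_extremum F \<tau>" "F' \<tau> = 0"
      by (rule extremum_near_nondegenerate_zero[OF crit[OF m] a F close e(1) small])
    then show ?thesis by blast
  qed
  then show ?thesis by (intro bchoice ballI)
qed

lemma extrema_near_perturbed_critical_points:
  fixes F' F'' G G' G'' f' f'' :: "real \<Rightarrow> real" and t tl :: "'i \<Rightarrow> real"
  assumes crit: "\<And>m. m \<in> S \<Longrightarrow> nondegenerate_zero f' f'' a \<eta> (t m)" and a: "0 < a" and \<eta>: "0 < \<eta>"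
    and tl: "\<And>m. m \<in> S \<Longrightarrow> F' (tl m) = 0 \<and> \<bar>tl m - t m\<bar> \<le> \<eta> / 2"
    and F'': "\<And>s. s \<in> {0<..<1} \<Longrightarrow> \<bar>F'' s - f'' s\<bar> \<le> a / 4"
    and G: "\<And>s. s \<in> {0<..<1} \<Longrightarrow> (G has_real_derivative G' s) (at s)"
    and G': "\<And>s. s \<in> {0<..<1} \<Longrightarrow> (G' has_real_derivative G'' s) (at s)"
    and close: "\<And>s. s \<in> {0<..<1} \<Longrightarrow> \<bar>G' s - F' s\<bar> \<le> \<epsilon> \<and> \<bar>G'' s - F'' s\<bar> \<le> \<epsilon>"
    and \<epsilon>: "\<epsilon> \<le> a / 4" "\<epsilon> \<le> a * \<eta> / 8"
  shows "\<exists>th. \<forall>m\<in>S. is_local_extremum G (th m) \<and> \<bar>th m - tl m\<bar> \<le> 2 * \<epsilon> / a"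
proof -
  have curvature: "\<bar>G'' s - f'' s\<bar> \<le> a / 2" if "s \<in> {0<..<1}" for s
    using close[OF that] F''[OF that] \<epsilon> by linarith
  have "\<exists>\<theta>. is_local_extremum G \<theta> \<and> \<bar>\<theta> - tl m\<bar> \<le> 2 * \<epsilon> / a" if m: "m \<in> S" for m
  proof -
    have tl_m: "\<bar>tl m - t m\<bar> \<le> \<eta> / 2" and F'_tl: "F' (tl m) = 0" using tl[OF m] by auto
    then have "tl m \<in> {t m - \<eta>..t m + \<eta>}" using \<eta> unfolding abs_diff_le_iff by auto
    then have "tl m \<in> {0<..<1}" using crit[OF m] unfolding nondegenerate_zero_def by blast
    then have "\<bar>G' (tl m) - F' (tl m)\<bar> \<le> \<epsilon>" using close by blast
    then have G'_tl: "\<bar>G' (tl m)\<bar> \<le> \<epsilon>" using F'_tl by simp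
    then have "\<bar>G' (tl m)\<bar> < a * \<eta> / 4" using \<epsilon> mult_pos_pos[OF a \<eta>] by linarith
    then obtain \<theta> where \<theta>: "\<bar>\<theta> - tl m\<bar> \<le> 2 * \<bar>G' (tl m)\<bar> / a" and extremum: "is_local_extremum G \<theta>"
      using extremum_near_perturbed_critical_point[OF crit[OF m] a tl_m G G' curvature] by blast
    have "2 * \<bar>G' (tl m)\<bar> / a \<le> 2 * \<epsilon> / a" using G'_tl a by (simp add: divide_right_mono)
    with \<theta> extremum show ?thesis by (intro exI[of _ \<theta>]) simp
  qed
  then show ?thesis by (intro bchoice ballI)
qed

lemma nondegenerate_zeros_of_derivative:
  fixes f f' f'' :: "real \<Rightarrow> real" and t :: "'i \<Rightarrow> real"
  assumes S: "finite S"
    and f: "\<And>x. x \<in> {0<..<1} \<Longrightarrow> (f has_real_derivative f' x) (at x)"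
    and f': "\<And>x. x \<in> {0<..<1} \<Longrightarrow> (f' has_real_derivative f'' x) (at x)"
    and f''_continuous: "continuous_on {0..1} f''"
    and extremum: "\<And>m. m \<in> S \<Longrightarrow> is_local_extremum f (t m)"
    and curved: "\<And>m. m \<in> S \<Longrightarrow> f'' (t m) \<noteq> 0"
  obtains a \<eta> where "0 < a" and "0 < \<eta>" and "\<And>m. m \<in> S \<Longrightarrow> nondegenerate_zero f' f'' a \<eta> (t m)"
proof -
  have t: "t m \<in> {0<..<1}" if "m \<in> S" for m
    using extremum[OF that] unfolding is_local_extremum_def by blast
  have "\<forall>\<^sub>F a in at_right 0. \<forall>m\<in>S. a < \<bar>f'' (t m)\<bar>"
  proof (rule eventually_ball_finite[OF S], rule ballI)
    fix m assume "m \<in> S"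
    then have "0 < \<bar>f'' (t m)\<bar>" using curved by simp
    then show "\<forall>\<^sub>F a in at_right 0. a < \<bar>f'' (t m)\<bar>"
      unfolding eventually_at_right_field by (intro exI[of _ "\<bar>f'' (t m)\<bar>"]) auto
  qed
  then obtain a where a: "0 < a" and a_le: "\<forall>m\<in>S. a < \<bar>f'' (t m)\<bar>"
    by (rule eventually_at_right_0_obtain)
  have "\<forall>\<^sub>F \<eta> in at_right 0. \<forall>m\<in>S. {t m - \<eta>..t m + \<eta>} \<subseteq> {0<..<1} \<and>
      sign_definite_on {t m - \<eta>..t m + \<eta>} f'' a"
  proof (rule eventually_ball_finite[OF S], rule ballI)
    fix m assume m: "m \<in> S"
    show "\<forall>\<^sub>F \<eta> in at_right 0. {t m - \<eta>..t m + \<eta>} \<subseteq> {0<..<1} \<and> sign_definite_on {t m - \<eta>..t m + \<eta>} f'' a"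
      using sign_definite_near[OF f''_continuous t[OF m]] a_le m by blast
  qed
  then obtain \<eta> where \<eta>: "0 < \<eta>" and near: "\<forall>m\<in>S. {t m - \<eta>..t m + \<eta>} \<subseteq> {0<..<1} \<and>
      sign_definite_on {t m - \<eta>..t m + \<eta>} f'' a"
    by (rule eventually_at_right_0_obtain)
  have "nondegenerate_zero f' f'' a \<eta> (t m)" if m: "m \<in> S" for m
    unfolding nondegenerate_zero_def
    using near m f' is_local_extremum_deriv_zero[OF extremum[OF m] f[OF t[OF m]]] by blast
  with a \<eta> show ?thesis using that by blast
qed

section \<open>Bias and concentration bounds\<close>

lemma ln_2_ge_half: "1 / 2 \<le> ln (2::real)"
proof -
  have "exp (1 / 2 :: real) \<le> 2" using real_exp_bound_lemma[of "1 / 2"] by simp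
  then show ?thesis by (subst ln_ge_iff) auto
qed

lemma concentration_rate_le:
  fixes \<beta> \<gamma> lam :: real and n :: nat
  assumes n: "2 \<le> n" and lam: "0 < lam" "lam \<le> 1"
    and rate: "sqrt (ln (real n)) / (sqrt (real n) * lam) \<le> 1"
  shows "\<bar>\<beta> * sqrt (10 * ln (real n) + 3) / (sqrt (real n) * lam) *
           (14 + 8 * \<gamma> * sqrt (10 * ln (real n) + 3) / (3 * sqrt (real n * lam)))\<bar>
         \<le> 4 * \<bar>\<beta>\<bar> * (14 + 11 * \<bar>\<gamma>\<bar>) * (sqrt (ln (real n)) / (sqrt (real n) * lam))"
proof -
  define l where "l = ln (real n)"
  define s where "s = sqrt (10 * l + 3)"
  define L where "L = sqrt l / (sqrt (real n) * lam)"
  have "ln 2 \<le> l" unfolding l_def using n by (subst ln_le_cancel_iff) auto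
  then have l: "1 / 2 \<le> l" using ln_2_ge_half by linarith
  have n_pos: "0 < sqrt (real n)" using n by simp
  have L: "0 \<le> L" "L \<le> 1" unfolding L_def l_def using n_pos lam l rate by auto
  have s: "0 \<le> s" "s \<le> 4 * sqrt l"
  proof -
    show "0 \<le> s" unfolding s_def using l by simp
    have "s \<le> sqrt (16 * l)" unfolding s_def using l by (intro real_sqrt_le_mono) simp
    then show "s \<le> 4 * sqrt l" by (simp add: real_sqrt_mult)
  qed
  have first: "s / (sqrt (real n) * lam) \<le> 4 * L"
    unfolding L_def using s n_pos lam by (simp add: divide_right_mono)
  have "s / (3 * sqrt (real n * lam)) \<le> 4 / 3 * (L * sqrt lam)"
  proof -
    have "s / (3 * sqrt (real n * lam)) \<le> 4 * sqrt l / (3 * (sqrt (real n) * sqrt lam))"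
      using s n_pos lam by (simp add: real_sqrt_mult divide_right_mono)
    also have "\<dots> = 4 / 3 * (L * sqrt lam)"
      unfolding L_def using lam n_pos by (simp add: field_simps)
    finally show ?thesis .
  qed
  also have "\<dots> \<le> 4 / 3" using L lam by (simp add: mult_le_one)
  finally have second: "s / (3 * sqrt (real n * lam)) \<le> 4 / 3" .
  have "\<bar>14 + 8 * \<gamma> * s / (3 * sqrt (real n * lam))\<bar> \<le> 14 + 8 * \<bar>\<gamma>\<bar> * (s / (3 * sqrt (real n * lam)))"
    using s lam by (simp add: abs_mult abs_triangle_ineq order_trans[OF abs_triangle_ineq])
  also have "\<dots> \<le> 14 + 8 * \<bar>\<gamma>\<bar> * (4 / 3)" using second by (intro add_left_mono mult_left_mono) auto
  also have "\<dots> \<le> 14 + 11 * \<bar>\<gamma>\<bar>" by simp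
  finally have bracket: "\<bar>14 + 8 * \<gamma> * s / (3 * sqrt (real n * lam))\<bar> \<le> 14 + 11 * \<bar>\<gamma>\<bar>" .
  have "\<bar>\<beta> * s / (sqrt (real n) * lam) * (14 + 8 * \<gamma> * s / (3 * sqrt (real n * lam)))\<bar> =
      \<bar>\<beta>\<bar> * (s / (sqrt (real n) * lam)) * \<bar>14 + 8 * \<gamma> * s / (3 * sqrt (real n * lam))\<bar>"
    using s n_pos lam by (simp add: abs_mult)
  also have "\<dots> \<le> \<bar>\<beta>\<bar> * (4 * L) * (14 + 11 * \<bar>\<gamma>\<bar>)"
    using first bracket s n_pos lam L by (intro mult_mono mult_left_mono) auto
  finally show ?thesis unfolding s_def L_def l_def by (simp add: ac_simps)
qed

lemma event_An_derivative_bounds: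
  obtains CE where "0 < CE"
    and "\<And>lam n X y k x. event_An K Kd p f0 sig lam n X y \<Longrightarrow> 2 \<le> n \<Longrightarrow> 0 < lam \<Longrightarrow> lam \<le> 1 \<Longrightarrow>
      sqrt (ln (real n)) / (sqrt (real n) * lam) \<le> 1 \<Longrightarrow> k \<le> 3 \<Longrightarrow> x \<in> {0<..<1} \<Longrightarrow>
      \<bar>mu_hat_deriv K Kd n lam X y k x - (deriv ^^ Suc k) (f_lambda K p lam f0) x\<bar>
        \<le> CE * (sqrt (ln (real n)) / (sqrt (real n) * lam))"
proof -
  define \<kappa> where "\<kappa> = kappa_diag Kd 0"
  define E where "E k = 4 * \<bar>2 * sqrt (\<kappa> * kappa_diag Kd (Suc k)) * R_const f0 sig\<bar> * (14 + 11 * \<bar>sqrt \<kappa>\<bar>)"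
    for k
  define CE where "CE = (\<Sum>k\<le>3. E k) + 1"
  have E: "0 \<le> E k" for k unfolding E_def by simp
  have E_le: "E k \<le> CE" if "k \<le> 3" for k
    using member_le_sum[of k "{..3}" E] E that unfolding CE_def by force
  show ?thesis
  proof (rule that)
    show "0 < CE" unfolding CE_def using E by (simp add: add_nonneg_pos sum_nonneg)
    fix lam :: real and n :: nat and X y :: "nat \<Rightarrow> real" and k :: nat and x :: real
    assume ev: "event_An K Kd p f0 sig lam n X y" and n: "2 \<le> n" and lam: "0 < lam" "lam \<le> 1"
      and rate: "sqrt (ln (real n)) / (sqrt (real n) * lam) \<le> 1" and k: "k \<le> 3" and x: "x \<in> {0<..<1}"
    have "\<bar>mu_hat_deriv K Kd n lam X y k x - (deriv ^^ Suc k) (f_lambda K p lam f0) x\<bar>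
        \<le> 2 * sqrt (\<kappa> * kappa_diag Kd (Suc k)) * R_const f0 sig * sqrt (10 * ln (real n) + 3) /
            (sqrt (real n) * lam) * (14 + 8 * sqrt \<kappa> * sqrt (10 * ln (real n) + 3) / (3 * sqrt (real n * lam)))"
      using ev k x unfolding event_An_def Let_def \<kappa>_def by blast
    also have "\<dots> \<le> E k * (sqrt (ln (real n)) / (sqrt (real n) * lam))"
      unfolding E_def by (rule order_trans[OF abs_ge_self concentration_rate_le[OF n lam rate]])
    also have "\<dots> \<le> CE * (sqrt (ln (real n)) / (sqrt (real n) * lam))"
      using E_le[OF k] n lam by (intro mult_right_mono) auto
    finally show "\<bar>mu_hat_deriv K Kd n lam X y k x - (deriv ^^ Suc k) (f_lambda K p lam f0) x\<bar>
        \<le> CE * (sqrt (ln (real n)) / (sqrt (real n) * lam))" .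
  qed
qed

lemma eventually_powr_le:
  fixes C X r :: real
  assumes r: "0 < r" and X: "0 < X"
  shows "\<forall>\<^sub>F lam in at_right 0. C * lam powr r \<le> X"
proof -
  have "((\<lambda>lam. lam powr r) \<longlongrightarrow> 0) (at_right 0)"
    by (rule tendsto_zero_powrI[OF tendsto_ident_at tendsto_const _ r])
      (rule eventually_mono[OF eventually_at_right_less], simp)
  then have "((\<lambda>lam. C * lam powr r) \<longlongrightarrow> 0) (at_right 0)" by (rule tendsto_mult_right_zero)
  from order_tendstoD(2)[OF this X] show ?thesis by eventually_elim simp
qed

lemma bias_small_for_small_lambda:
  fixes F :: "real \<Rightarrow> real \<Rightarrow> real" and f' f'' :: "real \<Rightarrow> real"
  assumes bias: "\<exists>c0>0. \<exists>C. \<forall>lam. 0 < lam \<and> lam < c0 \<longrightarrow>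
      (\<forall>x\<in>{0<..<1}. \<bar>deriv (F lam) x - f' x\<bar> \<le> C * lam powr r1 \<and>
        \<bar>(deriv ^^ 2) (F lam) x - f'' x\<bar> \<le> C * lam powr r2)"
    and r: "0 < r1" "0 < r2" and e: "0 < e1" "0 < e2"
  obtains B lam0 where "0 \<le> B" and "0 < lam0"
    and "\<And>lam. 0 < lam \<Longrightarrow> lam < lam0 \<Longrightarrow> lam < 1 \<and> B * lam powr r1 \<le> e1 \<and>
      (\<forall>x\<in>{0<..<1}. \<bar>deriv (F lam) x - f' x\<bar> \<le> B * lam powr r1 \<and> \<bar>(deriv ^^ 2) (F lam) x - f'' x\<bar> \<le> e2)"
proof -
  obtain C where C: "\<forall>\<^sub>F lam in at_right 0. \<forall>x\<in>{0<..<1}.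
      \<bar>deriv (F lam) x - f' x\<bar> \<le> C * lam powr r1 \<and> \<bar>(deriv ^^ 2) (F lam) x - f'' x\<bar> \<le> C * lam powr r2"
    using bias unfolding eventually_at_right_field by blast
  have "\<forall>\<^sub>F lam in at_right 0. lam < (1::real)"
    unfolding eventually_at_right_field by (intro exI[of _ 1]) auto
  moreover have "\<forall>\<^sub>F lam in at_right 0. \<bar>C\<bar> * lam powr r1 \<le> e1" using r e by (intro eventually_powr_le)
  moreover have "\<forall>\<^sub>F lam in at_right 0. \<bar>C\<bar> * lam powr r2 \<le> e2" using r e by (intro eventually_powr_le)
  ultimately have "\<forall>\<^sub>F lam in at_right 0. lam < 1 \<and> \<bar>C\<bar> * lam powr r1 \<le> e1 \<and>
      (\<forall>x\<in>{0<..<1}. \<bar>deriv (F lam) x - f' x\<bar> \<le> \<bar>C\<bar> * lam powr r1 \<and> \<bar>(deriv ^^ 2) (F lam) x - f'' x\<bar> \<le> e2)"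
    using C
  proof eventually_elim
    case (elim lam)
    have "C * lam powr r1 \<le> \<bar>C\<bar> * lam powr r1" "C * lam powr r2 \<le> \<bar>C\<bar> * lam powr r2"
      by (auto intro: mult_right_mono)
    with elim show ?case by (meson order_trans)
  qed
  then show ?thesis using that[of "\<bar>C\<bar>"] unfolding eventually_at_right_field by auto
qed

theorem lemma2:
  fixes f0 f0' f0'' :: "real \<Rightarrow> real" and t :: "nat \<Rightarrow> real" and M :: nat
    and K :: "real \<Rightarrow> real \<Rightarrow> real" and Kd :: "nat \<Rightarrow> nat \<Rightarrow> real \<Rightarrow> real \<Rightarrow> real"
    and p :: "real \<Rightarrow> real" and sig r1 r2 :: real
  assumes dens: "\<forall>x\<in>{0..1}. 0 \<le> p x" "p integrable_on {0..1}" "integral {0..1} p = 1"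
    and sig: "0 < sig"
    and A1: "\<forall>x\<in>{0..1}. (f0 has_real_derivative f0' x) (at x within {0..1})"
            "\<forall>x\<in>{0..1}. (f0' has_real_derivative f0'' x) (at x within {0..1})"
            "continuous_on {0..1} f0''"
    and A2: "1 \<le> M" "strict_mono_on {1..M} t" "\<forall>m\<in>{1..M}. 0 < t m \<and> t m < 1"
            "{s. is_local_extremum f0 s} = t ` {1..M}"
    and A3: "\<forall>m\<in>{1..M}. f0'' (t m) \<noteq> 0"
    and Kpd: "pd_kernel K"
    and B1: "kernel_Ck 8 K Kd"
    and C: "0 < r1" "r1 \<le> 1" "0 < r2" "r2 \<le> 1"
      "\<exists>c0>0. \<exists>C. \<forall>lam. 0 < lam \<and> lam < c0 \<longrightarrow>
         (\<forall>x\<in>{0<..<1}. \<bar>deriv (f_lambda K p lam f0) x - f0' x\<bar> \<le> C * lam powr r1 \<and>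
                        \<bar>(deriv ^^ 2) (f_lambda K p lam f0) x - f0'' x\<bar> \<le> C * lam powr r2)"
  shows "\<exists>lam0>0. \<exists>C1>0. \<exists>C2>0. \<exists>c>0. \<forall>lam. 0 < lam \<and> lam < lam0 \<longrightarrow>
     (\<exists>tl :: nat \<Rightarrow> real.
        (\<forall>m\<in>{1..M}. is_local_extremum (f_lambda K p lam f0) (tl m) \<and> \<bar>tl m - t m\<bar> \<le> C1 * lam powr r1) \<and>
        (\<forall>(n::nat) (X::nat \<Rightarrow> real) (y::nat \<Rightarrow> real).
            2 \<le> n \<and> (\<forall>i<n. X i \<in> {0..1}) \<and> sqrt (ln (real n)) / (sqrt (real n) * lam) \<le> c \<and>
            event_An K Kd p f0 sig lam n X y \<longrightarrow>
            (\<exists>th :: nat \<Rightarrow> real. \<forall>m\<in>{1..M}. is_local_extremum (mu_hat K n lam X y) (th m) \<and>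
               \<bar>th m - tl m\<bar> \<le> C2 * sqrt (ln (real n)) / (sqrt (real n) * lam))))"
proof -
  interpret smooth_psd_kernel_operator p K "Kd 1 0"
    using smooth_psd_kernel_operator_kernel_Ck[OF dens Kpd B1] by simp
  have f0_D: "\<And>x. x \<in> {0<..<1} \<Longrightarrow> (f0 has_real_derivative f0' x) (at x)"
    and f0'_D: "\<And>x. x \<in> {0<..<1} \<Longrightarrow> (f0' has_real_derivative f0'' x) (at x)"
    using A1(1,2) by (auto intro: has_real_derivative_at_interior)
  have f0_continuous: "continuous_on {0..1} f0"
    unfolding continuous_on_eq_continuous_within using A1(1) DERIV_continuous by blast
  obtain a \<eta> where a: "0 < a" and \<eta>: "0 < \<eta>"
    and crit: "\<And>m. m \<in> {1..M} \<Longrightarrow> nondegenerate_zero f0' f0'' a \<eta> (t m)"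
    using nondegenerate_zeros_of_derivative[of "{1..M}" f0 f0' f0'' t, OF _ f0_D f0'_D A1(3)] A2(4) A3 by blast
  obtain CE where CE: "0 < CE"
    and event: "\<And>lam n X y k x. event_An K Kd p f0 sig lam n X y \<Longrightarrow> 2 \<le> n \<Longrightarrow> 0 < lam \<Longrightarrow> lam \<le> 1 \<Longrightarrow>
      sqrt (ln (real n)) / (sqrt (real n) * lam) \<le> 1 \<Longrightarrow> k \<le> 3 \<Longrightarrow> x \<in> {0<..<1} \<Longrightarrow>
      \<bar>mu_hat_deriv K Kd n lam X y k x - (deriv ^^ Suc k) (f_lambda K p lam f0) x\<bar>
        \<le> CE * (sqrt (ln (real n)) / (sqrt (real n) * lam))"
    using event_An_derivative_bounds[of K Kd p f0 sig] by blast
  have "0 < a * \<eta> / 2" "0 < a / 4" using a \<eta> by simp_all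
  with bias_small_for_small_lambda[of "\<lambda>lam. f_lambda K p lam f0", OF C(5) C(1) C(3)]
  obtain B lam0 where B: "0 \<le> B" and lam0: "0 < lam0" and small_lambda: "\<And>lam. 0 < lam \<Longrightarrow> lam < lam0 \<Longrightarrow>
      lam < 1 \<and> B * lam powr r1 \<le> a * \<eta> / 2 \<and>
      (\<forall>x\<in>{0<..<1}. \<bar>deriv (f_lambda K p lam f0) x - f0' x\<bar> \<le> B * lam powr r1 \<and>
        \<bar>(deriv ^^ 2) (f_lambda K p lam f0) x - f0'' x\<bar> \<le> a / 4)"
    by blast
  define C1 where "C1 = (B + 1) / a"
  define C2 where "C2 = 2 * CE / a"
  define c where "c = min 1 (min (a / (4 * CE)) (a * \<eta> / (8 * CE)))"
  have C1: "0 < C1" and C2: "0 < C2" and c: "0 < c" "c \<le> 1"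
    using a \<eta> B CE by (auto simp: C1_def C2_def c_def)
  have "c \<le> a / (4 * CE)" "c \<le> a * \<eta> / (8 * CE)" unfolding c_def by auto
  then have CE_c: "CE * c \<le> a / 4" "CE * c \<le> a * \<eta> / 8" using CE by (simp_all add: field_simps)
  have main: "\<forall>lam. 0 < lam \<and> lam < lam0 \<longrightarrow> (\<exists>tl :: nat \<Rightarrow> real.
        (\<forall>m\<in>{1..M}. is_local_extremum (f_lambda K p lam f0) (tl m) \<and> \<bar>tl m - t m\<bar> \<le> C1 * lam powr r1) \<and>
        (\<forall>(n::nat) (X::nat \<Rightarrow> real) (y::nat \<Rightarrow> real).
            2 \<le> n \<and> (\<forall>i<n. X i \<in> {0..1}) \<and> sqrt (ln (real n)) / (sqrt (real n) * lam) \<le> c \<and>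
            event_An K Kd p f0 sig lam n X y \<longrightarrow>
            (\<exists>th :: nat \<Rightarrow> real. \<forall>m\<in>{1..M}. is_local_extremum (mu_hat K n lam X y) (th m) \<and>
               \<bar>th m - tl m\<bar> \<le> C2 * sqrt (ln (real n)) / (sqrt (real n) * lam))))"
    (is "\<forall>lam. _ \<longrightarrow> ?extrema lam")
  proof (intro allI impI)
    fix lam :: real assume "0 < lam \<and> lam < lam0"
    then have lam: "0 < lam" "lam < 1" and small: "B * lam powr r1 \<le> a * \<eta> / 2"
      and bias: "\<And>x. x \<in> {0<..<1} \<Longrightarrow> \<bar>deriv (f_lambda K p lam f0) x - f0' x\<bar> \<le> B * lam powr r1 \<and>
        \<bar>(deriv ^^ 2) (f_lambda K p lam f0) x - f0'' x\<bar> \<le> a / 4"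
      using small_lambda by auto
    obtain tl where tl: "\<And>m. m \<in> {1..M} \<Longrightarrow> is_local_extremum (f_lambda K p lam f0) (tl m) \<and>
        deriv (f_lambda K p lam f0) (tl m) = 0 \<and> \<bar>tl m - t m\<bar> \<le> B * lam powr r1 / a"
      using extrema_near_nondegenerate_zeros[where S = "{1..M}" and t = t, OF crit a \<eta> f_lambda_has_derivative[OF lam(1) f0_continuous]
          _ mult_nonneg_nonneg[OF B powr_ge_zero] small] bias by blast
    have "B * lam powr r1 / a \<le> C1 * lam powr r1" "B * lam powr r1 / a \<le> \<eta> / 2"
      using small a unfolding C1_def by (auto simp: field_simps)
    then have tl_near: "\<bar>tl m - t m\<bar> \<le> C1 * lam powr r1" "\<bar>tl m - t m\<bar> \<le> \<eta> / 2" if "m \<in> {1..M}" for m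
      using tl[OF that] by linarith+
    show "?extrema lam"
    proof (rule exI[of _ tl], intro conjI ballI allI impI)
      fix m assume "m \<in> {1..M}"
      then show "is_local_extremum (f_lambda K p lam f0) (tl m)" "\<bar>tl m - t m\<bar> \<le> C1 * lam powr r1"
        using tl tl_near by blast+
    next
      fix n :: nat and X y :: "nat \<Rightarrow> real"
      assume "2 \<le> n \<and> (\<forall>i<n. X i \<in> {0..1}) \<and> sqrt (ln (real n)) / (sqrt (real n) * lam) \<le> c \<and>
          event_An K Kd p f0 sig lam n X y"
      then have n: "2 \<le> n" and X: "\<forall>i<n. X i \<in> {0..1}" and ev: "event_An K Kd p f0 sig lam n X y"
        and rate: "sqrt (ln (real n)) / (sqrt (real n) * lam) \<le> c" by auto
      define L where "L = sqrt (ln (real n)) / (sqrt (real n) * lam)"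
      have "0 \<le> L" unfolding L_def using lam n by simp
      then have "CE * L \<le> CE * c" using rate CE unfolding L_def by (intro mult_left_mono) auto
      then have CE_L: "CE * L \<le> a / 4" "CE * L \<le> a * \<eta> / 8" using CE_c by linarith+
      have estimates: "\<bar>mu_hat_deriv K Kd n lam X y 0 s - deriv (f_lambda K p lam f0) s\<bar> \<le> CE * L \<and>
          \<bar>mu_hat_deriv K Kd n lam X y (Suc 0) s - (deriv ^^ 2) (f_lambda K p lam f0) s\<bar> \<le> CE * L"
        if "s \<in> {0<..<1}" for s
        using event[OF ev n lam(1) _ _ _ that, of 0] event[OF ev n lam(1) _ _ _ that, of 1] lam rate c
        unfolding L_def by (auto simp: numeral_2_eq_2)
      have "\<exists>th. \<forall>m\<in>{1..M}. is_local_extremum (mu_hat K n lam X y) (th m) \<and> \<bar>th m - tl m\<bar> \<le> 2 * (CE * L) / a"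
      proof (rule extrema_near_perturbed_critical_points[where S = "{1..M}" and t = t and tl = tl, OF crit a \<eta> _ _ _ _ estimates CE_L])
        show "deriv (f_lambda K p lam f0) (tl m) = 0 \<and> \<bar>tl m - t m\<bar> \<le> \<eta> / 2" if "m \<in> {1..M}" for m
          using tl[OF that] tl_near[OF that] by blast
        show "\<bar>(deriv ^^ 2) (f_lambda K p lam f0) s - f0'' s\<bar> \<le> a / 4" if "s \<in> {0<..<1}" for s
          using bias[OF that] by blast
        show "(mu_hat K n lam X y has_real_derivative mu_hat_deriv K Kd n lam X y 0 s) (at s)"
          if "s \<in> {0<..<1}" for s
          using mu_hat_has_derivative[OF B1 _ X that] by simp
        show "(mu_hat_deriv K Kd n lam X y 0 has_real_derivative mu_hat_deriv K Kd n lam X y (Suc 0) s) (at s)"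
          if "s \<in> {0<..<1}" for s
          using mu_hat_deriv_has_derivative[OF B1 _ X that] by simp
      qed
      then obtain th
        where th: "\<forall>m\<in>{1..M}. is_local_extremum (mu_hat K n lam X y) (th m) \<and> \<bar>th m - tl m\<bar> \<le> 2 * (CE * L) / a"
        by blast
      have "2 * (CE * L) / a = C2 * sqrt (ln (real n)) / (sqrt (real n) * lam)"
        unfolding C2_def L_def using a by (simp add: field_simps)
      with th show "\<exists>th :: nat \<Rightarrow> real. \<forall>m\<in>{1..M}. is_local_extremum (mu_hat K n lam X y) (th m) \<and>
          \<bar>th m - tl m\<bar> \<le> C2 * sqrt (ln (real n)) / (sqrt (real n) * lam)"
        by (intro exI[of _ th]) simp
    qed
  qed
  show ?thesis
    by (intro exI[of _ lam0] exI[of _ C1] exI[of _ C2] exI[of _ c] conjI lam0 C1 C2 c(1) main)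
qed

end
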